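(* Assume each $p_i$ is piece-wise continuous and there exists $0\leqslant\bar t<\infty$ with $p_i(t)=p_i^*$ for all $i\in\mathcal{I}$ and $t\geqslant\bar t$, where $\sum_{i\in\mathcal{I}}p_i^*=0$, and assume $\epsilon_iT_i<1$ for every $i\in\mathcal{I}_u$. Then the closed-loop system described in the context, with the distributed MPC component, satisfies: (i) for every $i\in\mathcal{I}_\omega$, if $\omega_i(0)\in[\underline\omega_i,\bar\omega_i]$ then $\omega_i(t)\in[\underline\omega_i,\bar\omega_i]$ for all $t\geqslant0$; (ii) for every $i\in\mathcal{I}_\omega$, if $\omega_i(0)\notin[\underline\omega_i,\bar\omega_i]$ there is a finite $t_0$ with $\omega_i(t)\in[\underline\omega_i,\bar\omega_i]$ for all $t\geqslant t_0$; (iii) the closed-loop trajectory converges to the equilibrium $(f_\infty,\mathbf{0}_n)$ of the open-loop system. Furthermore, $\alpha(t)$, $\alpha_{MPC}(t)$, $\alpha_{DF}(t)$ converge to $\mathbf{0}_n$ as $t\to\infty$.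
   Context: Network: $\mathcal{G}=(\mathcal{I},\mathcal{E})$ connected undirected graph, $\mathcal{I}=\{1,\dots,n\}$, $|\mathcal{E}|=m$, fixed orientation, incidence matrix $D$; $M=\mathrm{diag}(M_i)$, $E=\mathrm{diag}(E_i)$, $M_i,E_i>0$; $Y_b$ diagonal positive (entry $b_{ij}$ for edge $(i,j)$). $\mathcal{I}_\omega\subseteq\mathcal{I}_u\subseteq\mathcal{I}$; $\mathbb{A}=\{y:y_w=0\ \forall w\notin\mathcal{I}_u\}$. Dynamics $\dot f=Y_bD\omega$, $M\dot\omega=-E\omega-D^Tf+p(t)+\alpha(t)$; $(f_\infty,\mathbf{0}_n)$ is the equilibrium to which the open-loop system ($\alpha\equiv0$) converges. MPC problem for a graph: for a graph $\mathcal{H}=(\mathcal{J},\mathcal{F})$ (with inherited orientation, incidence matrix, and restricted $M,E,Y_b$), sets $\mathcal{J}_\omega\subseteq\mathcal{J}_u\subseteq\mathcal{J}$, data $\hat P=[\hat p(0),..,\hat p(N-1)]$, $f_0,\omega_0,a_0$ ($a_0$ zero outside $\mathcal{J}_u$), $\hat u^*(\mathcal{H},\mathcal{J}_u,\mathcal{J}_\omega,\hat P,f_0,\omega_0,a_0)$ is the $\hat u$-part of the unique minimizer of $\sum_{i\in\mathcal{J}_u}c_i\hat u_i^2+d\beta^2$ subject to, for $k=0..N-1$: $\hat f(k+1)=\hat f(k)+TY_bD\hat\omega(k)$; $M\hat\omega(k+1)=M\hat\omega(k)+T(-E\hat\omega(k)-D^T\hat f(k)+\hat p(k)+\hat u)$;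 $\hat\alpha_i(k+1)=\hat\alpha_i(k)+T(-\hat\alpha_i(k)/T_i-\hat\omega_i(k)+\hat u_i)$ ($i\in\mathcal{J}_u$); $\hat\alpha_i\equiv0$, $\hat u_i=0$ ($i\notin\mathcal{J}_u$); initial values $(f_0,\omega_0,a_0)$; $\underline\omega_i-\beta\leqslant\hat\omega_i(k+1)\leqslant\bar\omega_i+\beta$ ($i\in\mathcal{J}_\omega$); $|\hat u_i|\leqslant\epsilon_i|a_{0,i}|$ ($i\in\mathcal{J}_u$). Here $T,\tilde t>0$, $N=\lceil\tilde t/T\rceil$, $c_i,\epsilon_i,T_i>0$, $d>0$, $\underline\omega_i<\bar\omega_i$. Partition: induced subgraphs $\mathcal{G}_\beta=(\mathcal{I}_\beta,\mathcal{E}_\beta)$, $\beta=1,\dots,r$, with $\mathcal{I}_u\subseteq\bigcup_\beta\mathcal{I}_\beta$ and $\mathcal{I}_\eta\cap\mathcal{I}_\beta\cap\mathcal{I}_u=\emptyset$ for $\eta\neq\beta$. Let $\mathcal{I}_{u,\beta}=\mathcal{I}_u\cap\mathcal{I}_\beta$, $\mathcal{I}_{\omega,\beta}=\mathcal{I}_\omega\cap\mathcal{I}_\beta$, $\mathcal{E}'_\beta$ the edges between $\mathcal{I}_\beta$ and $\mathcal{I}\setminus\mathcal{I}_\beta$, and $(f_\beta,\omega_\beta,\alpha_{MPC,\beta})$ the states restricted to $\mathcal{G}_\beta$. Each region has sampling times $0=\Delta^0_\beta<\Delta^1_\beta<\cdots$ and piece-wise continuous forecasts $p^{fcst}_{t,\beta}:[t,t+\tilde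 t]\to\mathbb{R}^{|\mathcal{I}_\beta|}$. For $i\in\mathcal{I}_\beta$ define $p^{fcst,f}_{t,\beta,i}(\tau)=\sum_{j\to i,(j,i)\in\mathcal{E}'_\beta}f_{ji}(t)-\sum_{i\to j,(i,j)\in\mathcal{E}'_\beta}f_{ij}(t)$ for $\tau\in[t,t+\tilde t]$ (where $j\to i$ means $j$ is the positive end of the edge), and $\bar p^{fcst}_{t,\beta}=p^{fcst}_{t,\beta}+p^{fcst,f}_{t,\beta}$, sampled as $\hat P_{j,\beta}=[\bar p^{fcst}_{\Delta^j_\beta,\beta}(\Delta^j_\beta+kT)]_{k=0}^{N-1}$. Distributed MPC: for $i\in\mathcal{I}_u$, with $\beta$ the unique region containing $i$, and $t\in[\Delta^j_\beta,\Delta^{j+1}_\beta)$, $u_{MPC,i}(t)=\hat u^*_i(\mathcal{G}_\beta,\mathcal{I}_{u,\beta},\mathcal{I}_{\omega,\beta},\hat P_{j,\beta},f_\beta(\Delta^j_\beta),\omega_\beta(\Delta^j_\beta),\alpha_{MPC,\beta}(\Delta^j_\beta))$; $u_{MPC,i}=0$ for $i\notin\mathcal{I}_u$. Filters: $\hat u_{MPC,i}=\max\{-\epsilon_i|\alpha_{MPC,i}|,\min\{\epsilon_i|\alpha_{MPC,i}|,u_{MPC,i}\}\}$; $\dot\alpha_{MPC,i}=-\alpha_{MPC,i}/T_i-\omega_i+\hat u_{MPC,i}$ for $i\in\mathcal{I}_u$, $\alpha_{MPC,i}\equiv0$ otherwise. Top layer: for $i\in\mathcal{I}_\omega$, $\bar\gamma_i,\underline\gamma_i>0$,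 $\underline\omega_i<\underline\omega_i^{thr}<0<\bar\omega_i^{thr}<\bar\omega_i$, $v_i=E_i\omega_i+[D^T]_if-p_i-\alpha_{MPC,i}$; $\alpha_{DF,i}=\min\{0,\bar\gamma_i(\bar\omega_i-\omega_i)/(\omega_i-\bar\omega_i^{thr})+v_i\}$ if $\omega_i>\bar\omega_i^{thr}$, $0$ if $\underline\omega_i^{thr}\leqslant\omega_i\leqslant\bar\omega_i^{thr}$, $\max\{0,\underline\gamma_i(\underline\omega_i-\omega_i)/(\underline\omega_i^{thr}-\omega_i)+v_i\}$ if $\omega_i<\underline\omega_i^{thr}$; $\alpha_{DF,i}\equiv0$ for $i\notin\mathcal{I}_\omega$. Total control $\alpha=\alpha_{DF}+\alpha_{MPC}$. *)

theory Defs
  imports "HOL-Analysis.Analysis"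
begin

text \<open>Nodes have an arbitrary type 'v; the node set is nodes, the oriented edges are
  pairs (i,j) meaning i is the positive end (tail) of the edge.  The incidence matrix
  is D(e,i) = 1 if i is the tail of e, -1 if i is its head, 0 otherwise.\<close>

record 'v sys =
  nodes :: "'v set"
  edges :: "('v \<times> 'v) set"
  Mi :: "'v \<Rightarrow> real"
  Ei :: "'v \<Rightarrow> real"
  yb :: "'v \<times> 'v \<Rightarrow> real" \<comment> \<open>diagonal entries b_ij of Y_b\<close>
  Iu :: "'v set"
  Iw :: "'v set"
  Ts :: real                  \<comment> \<open>MPC step T\<close>
  th :: real                  \<comment> \<open>horizon length t-tilde\<close>
  cc :: "'v \<Rightarrow> real"
  dd :: real
  eps :: "'v \<Rightarrow> real"
  Tc :: "'v \<Rightarrow> real"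
  wlo :: "'v \<Rightarrow> real"       \<comment> \<open>lower frequency bound\<close>
  whi :: "'v \<Rightarrow> real"       \<comment> \<open>upper frequency bound\<close>
  glo :: "'v \<Rightarrow> real"
  ghi :: "'v \<Rightarrow> real"
  thlo :: "'v \<Rightarrow> real"      \<comment> \<open>lower threshold\<close>
  thhi :: "'v \<Rightarrow> real"      \<comment> \<open>upper threshold\<close>

text \<open>(D^T f)_i computed over an edge set F.\<close>
definition flow_out :: "('v \<times> 'v) set \<Rightarrow> ('v \<times> 'v \<Rightarrow> real) \<Rightarrow> 'v \<Rightarrow> real" where
  "flow_out F f i = (\<Sum>e\<in>{e\<in>F. fst e = i}. f e) - (\<Sum>e\<in>{e\<in>F. snd e = i}. f e)"

definition connected_oriented_graph :: "'v set \<Rightarrow> ('v \<times> 'v) set \<Rightarrow> bool" where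
  "connected_oriented_graph V E \<longleftrightarrow> finite V \<and> V \<noteq> {} \<and> E \<subseteq> V \<times> V
     \<and> (\<forall>(i,j)\<in>E. i \<noteq> j \<and> (j,i) \<notin> E)
     \<and> (\<forall>i\<in>V. \<forall>j\<in>V. (i,j) \<in> (E \<union> E\<inverse>)\<^sup>*)"

definition piecewise_cont :: "real set \<Rightarrow> (real \<Rightarrow> real) \<Rightarrow> bool" where
  "piecewise_cont A g \<longleftrightarrow> (\<exists>S. (\<forall>a b. finite (S \<inter> {a..b}))
     \<and> (\<forall>t\<in>A - S. continuous (at t within A) g)
     \<and> (\<forall>t\<in>A \<inter> S. (\<exists>l. (g \<longlongrightarrow> l) (at t within (A \<inter> {..<t})))
                 \<and> (\<exists>l. (g \<longlongrightarrow> l) (at t within (A \<inter> {t<..})))))"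

definition horizon :: "'v sys \<Rightarrow> nat" where
  "horizon S = nat \<lceil>th S / Ts S\<rceil>"

text \<open>Predicted trajectory (f-hat, omega-hat, alpha-hat) of the MPC problem for the graph with
  edge set F, control set Ju, forecast P (P k = p-hat(k)), constant input u and initial data.\<close>
fun pred_traj :: "'v sys \<Rightarrow> ('v \<times> 'v) set \<Rightarrow> 'v set \<Rightarrow> (nat \<Rightarrow> 'v \<Rightarrow> real)
    \<Rightarrow> ('v \<times> 'v \<Rightarrow> real) \<Rightarrow> ('v \<Rightarrow> real) \<Rightarrow> ('v \<Rightarrow> real) \<Rightarrow> ('v \<Rightarrow> real) \<Rightarrow> nat
    \<Rightarrow> ('v \<times> 'v \<Rightarrow> real) \<times> ('v \<Rightarrow> real) \<times> ('v \<Rightarrow> real)" where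
  "pred_traj S F Ju P f0 w0 a0 u 0 = (f0, w0, a0)"
| "pred_traj S F Ju P f0 w0 a0 u (Suc k) =
     (let (f, w, a) = pred_traj S F Ju P f0 w0 a0 u k in
       (\<lambda>e. if e \<in> F then f e + Ts S * yb S e * (w (fst e) - w (snd e)) else f e,
        \<lambda>i. w i + Ts S * (- Ei S i * w i - flow_out F f i + P k i + u i) / Mi S i,
        \<lambda>i. if i \<in> Ju then a i + Ts S * (- a i / Tc S i - w i + u i) else 0))"

definition mpc_feasible :: "'v sys \<Rightarrow> ('v \<times> 'v) set \<Rightarrow> 'v set \<Rightarrow> 'v set \<Rightarrow> (nat \<Rightarrow> 'v \<Rightarrow> real)
    \<Rightarrow> ('v \<times> 'v \<Rightarrow> real) \<Rightarrow> ('v \<Rightarrow> real) \<Rightarrow> ('v \<Rightarrow> real) \<Rightarrow> ('v \<Rightarrow> real) \<Rightarrow> real \<Rightarrow> bool" where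
  "mpc_feasible S F Ju Jw P f0 w0 a0 u \<beta> \<longleftrightarrow>
     (\<forall>i. i \<notin> Ju \<longrightarrow> u i = 0)
     \<and> (\<forall>k < horizon S. \<forall>i\<in>Jw.
          wlo S i - \<beta> \<le> fst (snd (pred_traj S F Ju P f0 w0 a0 u (Suc k))) i
        \<and> fst (snd (pred_traj S F Ju P f0 w0 a0 u (Suc k))) i \<le> whi S i + \<beta>)
     \<and> (\<forall>i\<in>Ju. \<bar>u i\<bar> \<le> eps S i * \<bar>a0 i\<bar>)"

definition mpc_cost :: "'v sys \<Rightarrow> 'v set \<Rightarrow> ('v \<Rightarrow> real) \<Rightarrow> real \<Rightarrow> real" where
  "mpc_cost S Ju u \<beta> = (\<Sum>i\<in>Ju. cc S i * (u i)\<^sup>2) + dd S * \<beta>\<^sup>2"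

text \<open>u-hat-star: the u-part of the unique minimizer.\<close>
definition mpc_u :: "'v sys \<Rightarrow> ('v \<times> 'v) set \<Rightarrow> 'v set \<Rightarrow> 'v set \<Rightarrow> (nat \<Rightarrow> 'v \<Rightarrow> real)
    \<Rightarrow> ('v \<times> 'v \<Rightarrow> real) \<Rightarrow> ('v \<Rightarrow> real) \<Rightarrow> ('v \<Rightarrow> real) \<Rightarrow> 'v \<Rightarrow> real" where
  "mpc_u S F Ju Jw P f0 w0 a0 =
     (THE u. \<exists>\<beta>. mpc_feasible S F Ju Jw P f0 w0 a0 u \<beta>
        \<and> (\<forall>u' \<beta>'. mpc_feasible S F Ju Jw P f0 w0 a0 u' \<beta>'
              \<longrightarrow> mpc_cost S Ju u \<beta> \<le> mpc_cost S Ju u' \<beta>'))"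

definition samp_index :: "(nat \<Rightarrow> real) \<Rightarrow> real \<Rightarrow> nat" where
  "samp_index \<Delta> t = (THE j. \<Delta> j \<le> t \<and> t < \<Delta> (Suc j))"

definition region_of :: "nat \<Rightarrow> (nat \<Rightarrow> 'v set) \<Rightarrow> 'v \<Rightarrow> nat" where
  "region_of r Reg i = (THE \<beta>. \<beta> \<in> {1..r} \<and> i \<in> Reg \<beta>)"

definition boundary_edges :: "'v sys \<Rightarrow> 'v set \<Rightarrow> ('v \<times> 'v) set" where
  "boundary_edges S R = {e \<in> edges S. (fst e \<in> R) \<noteq> (snd e \<in> R)}"

text \<open>p^{fcst,f}: net inflow over boundary edges (j -> i means j is the tail).\<close>
definition p_flow :: "'v sys \<Rightarrow> 'v set \<Rightarrow> ('v \<times> 'v \<Rightarrow> real) \<Rightarrow> 'v \<Rightarrow> real" where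
  "p_flow S R f i = (\<Sum>e\<in>{e\<in>boundary_edges S R. snd e = i}. f e)
                  - (\<Sum>e\<in>{e\<in>boundary_edges S R. fst e = i}. f e)"

text \<open>Distributed MPC input u_MPC,i(t).  Delta b j = j-th sampling time of region b;
  fc b j = forecast p^{fcst}_{Delta b j, b} (a function of tau and the node).\<close>
definition u_mpc :: "'v sys \<Rightarrow> nat \<Rightarrow> (nat \<Rightarrow> 'v set) \<Rightarrow> (nat \<Rightarrow> nat \<Rightarrow> real)
    \<Rightarrow> (nat \<Rightarrow> nat \<Rightarrow> real \<Rightarrow> 'v \<Rightarrow> real)
    \<Rightarrow> (real \<Rightarrow> 'v \<times> 'v \<Rightarrow> real) \<Rightarrow> (real \<Rightarrow> 'v \<Rightarrow> real) \<Rightarrow> (real \<Rightarrow> 'v \<Rightarrow> real)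
    \<Rightarrow> real \<Rightarrow> 'v \<Rightarrow> real" where
  "u_mpc S r Reg \<Delta> fc f w aM t i =
     (if i \<in> Iu S then
        (let b = region_of r Reg i;
             j = samp_index (\<Delta> b) t;
             t0 = \<Delta> b j;
             R = Reg b;
             F = edges S \<inter> (R \<times> R);
             P = (\<lambda>k l. if l \<in> R then fc b j (t0 + real k * Ts S) l + p_flow S R (f t0) l else 0)
         in mpc_u S F (Iu S \<inter> R) (Iw S \<inter> R) P
              (\<lambda>e. if e \<in> F then f t0 e else 0)
              (\<lambda>l. if l \<in> R then w t0 l else 0)
              (\<lambda>l. if l \<in> R then aM t0 l else 0) i)
      else 0)"

definition clamp_u :: "'v sys \<Rightarrow> 'v \<Rightarrow> real \<Rightarrow> real \<Rightarrow> real" where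
  "clamp_u S i a u = max (- (eps S i * \<bar>a\<bar>)) (min (eps S i * \<bar>a\<bar>) u)"

definition alpha_df :: "'v sys \<Rightarrow> (real \<Rightarrow> 'v \<Rightarrow> real)
    \<Rightarrow> (real \<Rightarrow> 'v \<times> 'v \<Rightarrow> real) \<Rightarrow> (real \<Rightarrow> 'v \<Rightarrow> real) \<Rightarrow> (real \<Rightarrow> 'v \<Rightarrow> real)
    \<Rightarrow> real \<Rightarrow> 'v \<Rightarrow> real" where
  "alpha_df S p f w aM t i =
     (if i \<in> Iw S then
        (let v = Ei S i * w t i + flow_out (edges S) (f t) i - p t i - aM t i in
         if w t i > thhi S i then min 0 (ghi S i * (whi S i - w t i) / (w t i - thhi S i) + v)
         else if w t i < thlo S i then max 0 (glo S i * (wlo S i - w t i) / (thlo S i - w t i) + v)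
         else 0)
      else 0)"

definition closed_loop_solution :: "'v sys \<Rightarrow> nat \<Rightarrow> (nat \<Rightarrow> 'v set) \<Rightarrow> (nat \<Rightarrow> nat \<Rightarrow> real)
    \<Rightarrow> (nat \<Rightarrow> nat \<Rightarrow> real \<Rightarrow> 'v \<Rightarrow> real) \<Rightarrow> (real \<Rightarrow> 'v \<Rightarrow> real)
    \<Rightarrow> (real \<Rightarrow> 'v \<times> 'v \<Rightarrow> real) \<Rightarrow> (real \<Rightarrow> 'v \<Rightarrow> real) \<Rightarrow> (real \<Rightarrow> 'v \<Rightarrow> real) \<Rightarrow> bool" where
  "closed_loop_solution S r Reg \<Delta> fc p f w aM \<longleftrightarrow>
     (\<forall>e\<in>edges S. continuous_on {0..} (\<lambda>t. f t e))
     \<and> (\<forall>i\<in>nodes S. continuous_on {0..} (\<lambda>t. w t i))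
     \<and> (\<forall>i\<in>nodes S. continuous_on {0..} (\<lambda>t. aM t i))
     \<and> (\<forall>i. i \<notin> Iu S \<longrightarrow> (\<forall>t\<ge>0. aM t i = 0))
     \<and> (\<exists>X. countable X \<and> (\<forall>t>0. t \<notin> X \<longrightarrow>
          (\<forall>e\<in>edges S. ((\<lambda>s. f s e) has_real_derivative
                yb S e * (w t (fst e) - w t (snd e))) (at t))
        \<and> (\<forall>i\<in>nodes S. ((\<lambda>s. w s i) has_real_derivative
                (- Ei S i * w t i - flow_out (edges S) (f t) i + p t i
                 + (alpha_df S p f w aM t i + aM t i)) / Mi S i) (at t))
        \<and> (\<forall>i\<in>Iu S. ((\<lambda>s. aM s i) has_real_derivative
                (- aM t i / Tc S i - w t i
                 + clamp_u S i (aM t i) (u_mpc S r Reg \<Delta> fc f w aM t i))) (at t))))"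

definition open_loop_solution :: "'v sys \<Rightarrow> (real \<Rightarrow> 'v \<Rightarrow> real)
    \<Rightarrow> (real \<Rightarrow> 'v \<times> 'v \<Rightarrow> real) \<Rightarrow> (real \<Rightarrow> 'v \<Rightarrow> real) \<Rightarrow> bool" where
  "open_loop_solution S p f w \<longleftrightarrow>
     (\<forall>e\<in>edges S. continuous_on {0..} (\<lambda>t. f t e))
     \<and> (\<forall>i\<in>nodes S. continuous_on {0..} (\<lambda>t. w t i))
     \<and> (\<exists>X. countable X \<and> (\<forall>t>0. t \<notin> X \<longrightarrow>
          (\<forall>e\<in>edges S. ((\<lambda>s. f s e) has_real_derivative
                yb S e * (w t (fst e) - w t (snd e))) (at t))
        \<and> (\<forall>i\<in>nodes S. ((\<lambda>s. w s i) has_real_derivative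
                (- Ei S i * w t i - flow_out (edges S) (f t) i + p t i) / Mi S i) (at t))))"

end

(* Once the disturbance has settled to p*, the energy
     V = sum_i M_i w_i^2 + sum_e (f_e - f_inf_e)^2 / b_e + sum_(i in I_u) alpha_MPC_i^2
   is nonincreasing: the top layer only ever opposes the frequency (w_i alpha_DF_i <= 0), the
   filter gives |u_i| <= eps_i |alpha_MPC_i|, which together with eps_i T_i < 1 makes each
   alpha_MPC term dissipative, and the flow terms cancel because D^T f_inf = p*.  So
   V' <= -2 E_i w_i^2 and V' <= -2 (1/T_i - eps_i) alpha_MPC_i^2.  As V bounds the state, all
   derivatives are bounded, and a Barbalat-type argument gives w -> 0 and alpha_MPC -> 0; then
   alpha_DF vanishes once w is inside the thresholds.  The swing equation now forces D^T f -> p*,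
   while the circulation part of f (for the inner product weighted by 1/b) is conserved along
   every trajectory and hence equals that of f_inf; together these pin f to f_inf.  Outside the
   band [w_lo, w_hi] the top layer makes M_i w_i' point back into the band, which gives its
   invariance. *)

theory Submission
  imports Defs
begin

section \<open>Monotonicity with countably many exceptional points\<close>

lemma last_crossing:
  fixes g :: "real \<Rightarrow> real"
  assumes "a \<le> b" and cont: "continuous_on {a..b} g" and "g a \<le> c" and "c < g b"
  obtains s where "a \<le> s" "s < b" "g s = c" "\<And>r. s < r \<Longrightarrow> r \<le> b \<Longrightarrow> c < g r"
proof -
  let ?A = "{r\<in>{a..b}. g r \<le> c}"
  define s where "s = Sup ?A"
  have "closed ?A"
    using continuous_closed_preimage[OF cont, of "{..c}"] by (simp add: vimage_def Int_def conj_commute)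
  moreover have "a \<in> ?A" using assms by auto
  moreover have bdd: "bdd_above ?A" by (rule bdd_aboveI[of _ b]) auto
  ultimately have sA: "s \<in> ?A" unfolding s_def by (intro closed_contains_Sup) auto
  have after: "c < g r" if "s < r" "r \<le> b" for r
    using cSup_upper[OF _ bdd, of r] that sA unfolding s_def by force
  have sb: "s < b" using sA assms by (cases "s = b") auto
  have "(g \<longlongrightarrow> g s) (at_right s)"
    using continuous_on_subset[OF cont] sA sb by (intro continuous_on_Icc_at_rightD) auto
  moreover have "\<forall>\<^sub>F r in at_right s. c \<le> g r"
    using eventually_at_right_less[of s] order_tendstoD(2)[OF tendsto_ident_at sb]
    by eventually_elim (use after in force)
  ultimately have "c \<le> g s" by (intro tendsto_lowerbound) auto
  with sA sb after show ?thesis by (intro that) auto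
qed

lemma DERIV_pos_imp_increasing_countable:
  fixes h h' :: "real \<Rightarrow> real"
  assumes "a \<le> b" and cont: "continuous_on {a..b} h" and X: "countable X"
    and der: "\<And>t. a < t \<Longrightarrow> t < b \<Longrightarrow> t \<notin> X \<Longrightarrow> (h has_real_derivative h' t) (at t)"
    and pos: "\<And>t. a < t \<Longrightarrow> t < b \<Longrightarrow> t \<notin> X \<Longrightarrow> h' t > 0"
  shows "h a \<le> h b"
proof (rule ccontr)
  assume "\<not> h a \<le> h b"
  hence hb: "h b < h a" by simp
  \<comment> \<open>The last time at which h passes a level y in (h b, h a) must be exceptional, since h
      increases near every other point; distinct levels give distinct times.\<close>
  have "\<exists>s. s \<in> X \<and> h s = y" if y: "h b < y" "y < h a" for y
  proof -
    have "continuous_on {a..b} (\<lambda>t. - h t)" by (intro continuous_intros cont)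
    then obtain s where s: "a \<le> s" "s < b" "h s = y" and after: "\<And>r. s < r \<Longrightarrow> r \<le> b \<Longrightarrow> h r < y"
      using last_crossing[of a b "\<lambda>t. - h t" "- y"] \<open>a \<le> b\<close> y by auto
    have "a < s" using s y by (cases "a = s") auto
    have "s \<in> X"
    proof (rule ccontr)
      assume "s \<notin> X"
      with der pos \<open>a < s\<close> s obtain d where d: "d > 0" "\<forall>e>0. e < d \<longrightarrow> h s < h (s + e)"
        using DERIV_pos_inc_right by blast
      define e where "e = min (d/2) ((b - s)/2)"
      have e: "0 < e" "e < d" "s + e \<le> b" using d(1) s(2) unfolding e_def by (auto simp: min_def field_simps)
      with d(2) after[of "s + e"] s(3) show False by force
    qed
    with s show ?thesis by blast
  qed
  then obtain T where T: "\<And>y. y \<in> {h b<..<h a} \<Longrightarrow> T y \<in> X \<and> h (T y) = y"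
    by (metis greaterThanLessThan_iff)
  have "inj_on T {h b<..<h a}" by (rule inj_onI) (metis T)
  moreover have "T ` {h b<..<h a} \<subseteq> X" using T by auto
  ultimately have "countable {h b<..<h a}"
    using countable_image_inj_on countable_subset X by blast
  with uncountable_open_interval[of "h b" "h a"] hb show False by simp
qed

lemma DERIV_nonneg_imp_increasing_countable:
  fixes g g' :: "real \<Rightarrow> real"
  assumes "a \<le> b" and cont: "continuous_on {a..b} g" and X: "countable X"
    and der: "\<And>t. a < t \<Longrightarrow> t < b \<Longrightarrow> t \<notin> X \<Longrightarrow> (g has_real_derivative g' t) (at t)"
    and nonneg: "\<And>t. a < t \<Longrightarrow> t < b \<Longrightarrow> t \<notin> X \<Longrightarrow> g' t \<ge> 0"
  shows "g a \<le> g b"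
proof (rule field_le_epsilon)
  fix e :: real assume "0 < e"
  define k where "k = e / (b - a + 1)"
  have k: "k > 0" "k * (b - a) \<le> e"
    using \<open>a \<le> b\<close> \<open>0 < e\<close> by (auto simp: k_def field_simps)
  have "g a + k * a \<le> g b + k * b"
    using DERIV_pos_imp_increasing_countable[of a b "\<lambda>t. g t + k * t" X "\<lambda>t. g' t + k"]
      assms k by (force intro!: continuous_intros derivative_eq_intros)
  with k show "g a \<le> g b + e" by (simp add: algebra_simps)
qed

lemma increment_le_countable:
  fixes g g' :: "real \<Rightarrow> real"
  assumes "a \<le> b" and "continuous_on {a..b} g" and "countable X"
    and "\<And>t. a < t \<Longrightarrow> t < b \<Longrightarrow> t \<notin> X \<Longrightarrow> (g has_real_derivative g' t) (at t)"
    and "\<And>t. a < t \<Longrightarrow> t < b \<Longrightarrow> t \<notin> X \<Longrightarrow> g' t \<le> B"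
  shows "g b - g a \<le> B * (b - a)"
  using DERIV_nonneg_imp_increasing_countable[of a b "\<lambda>t. B * t - g t" X "\<lambda>t. B - g' t"] assms
  by (force simp: algebra_simps intro!: continuous_intros derivative_eq_intros)

lemma increment_ge_countable:
  fixes g g' :: "real \<Rightarrow> real"
  assumes "a \<le> b" and "continuous_on {a..b} g" and "countable X"
    and "\<And>t. a < t \<Longrightarrow> t < b \<Longrightarrow> t \<notin> X \<Longrightarrow> (g has_real_derivative g' t) (at t)"
    and "\<And>t. a < t \<Longrightarrow> t < b \<Longrightarrow> t \<notin> X \<Longrightarrow> B \<le> g' t"
  shows "B * (b - a) \<le> g b - g a"
  using DERIV_nonneg_imp_increasing_countable[of a b "\<lambda>t. g t - B * t" X "\<lambda>t. g' t - B"] assms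
  by (force simp: algebra_simps intro!: continuous_intros derivative_eq_intros)

lemma abs_increment_le_countable:
  fixes g g' :: "real \<Rightarrow> real"
  assumes "a \<le> b" and "continuous_on {a..b} g" and "countable X"
    and "\<And>t. a < t \<Longrightarrow> t < b \<Longrightarrow> t \<notin> X \<Longrightarrow> (g has_real_derivative g' t) (at t)"
    and bound: "\<And>t. a < t \<Longrightarrow> t < b \<Longrightarrow> t \<notin> X \<Longrightarrow> \<bar>g' t\<bar> \<le> B"
  shows "\<bar>g b - g a\<bar> \<le> B * (b - a)"
proof -
  have "g b - g a \<le> B * (b - a)"
    using increment_le_countable[OF assms(1-4), of B] bound by (force simp: abs_le_iff)
  moreover have "- B * (b - a) \<le> g b - g a"
    using increment_ge_countable[OF assms(1-4), of "- B"] bound by (force simp: abs_le_iff)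
  ultimately show ?thesis by (simp add: abs_le_iff)
qed

lemma DERIV_nonpos_imp_decreasing_countable:
  fixes g g' :: "real \<Rightarrow> real"
  assumes "a \<le> b" and "continuous_on {a..b} g" and "countable X"
    and "\<And>t. a < t \<Longrightarrow> t < b \<Longrightarrow> t \<notin> X \<Longrightarrow> (g has_real_derivative g' t) (at t)"
    and "\<And>t. a < t \<Longrightarrow> t < b \<Longrightarrow> t \<notin> X \<Longrightarrow> g' t \<le> 0"
  shows "g b \<le> g a"
  using increment_le_countable[OF assms] by simp

lemma DERIV_nonpos_above_imp_le:
  fixes g g' :: "real \<Rightarrow> real"
  assumes cont: "continuous_on {a..} g" and X: "countable X"
    and der: "\<And>t. a < t \<Longrightarrow> t \<notin> X \<Longrightarrow> (g has_real_derivative g' t) (at t)"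
    and nonpos: "\<And>t. a < t \<Longrightarrow> t \<notin> X \<Longrightarrow> c < g t \<Longrightarrow> g' t \<le> 0"
    and "g a \<le> c" and "a \<le> t"
  shows "g t \<le> c"
proof (rule ccontr)
  assume "\<not> g t \<le> c"
  moreover have cont_t: "continuous_on {a..t} g" using continuous_on_subset[OF cont] by auto
  ultimately obtain s where s: "a \<le> s" "s < t" "g s = c" and above: "\<And>r. s < r \<Longrightarrow> r \<le> t \<Longrightarrow> c < g r"
    using last_crossing[of a t g c] assms by auto
  have "g t \<le> g s"
    using s above
    by (intro DERIV_nonpos_imp_decreasing_countable[OF _ continuous_on_subset[OF cont_t] X der]) (auto intro: nonpos)
  with s \<open>\<not> g t \<le> c\<close> show False by simp
qed

section \<open>Asymptotics of differential inequalities\<close>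

lemma antimono_eventually_small_decrease:
  fixes V :: "real \<Rightarrow> real"
  assumes antimono: "\<And>s t. a \<le> s \<Longrightarrow> s \<le> t \<Longrightarrow> V t \<le> V s"
    and nonneg: "\<And>t. a \<le> t \<Longrightarrow> 0 \<le> V t" and "\<eta> > 0"
  shows "\<exists>T\<ge>a. \<forall>s t. T \<le> s \<longrightarrow> s \<le> t \<longrightarrow> V s - V t < \<eta>"
proof -
  define L where "L = Inf (V ` {a..})"
  have bdd: "bdd_below (V ` {a..})" using nonneg by (intro bdd_belowI[of _ 0]) auto
  obtain T where T: "a \<le> T" "V T < L + \<eta>"
    using cInf_less_iff[OF _ bdd, of "L + \<eta>"] \<open>\<eta> > 0\<close> unfolding L_def by auto
  have L: "L \<le> V t" if "a \<le> t" for t using that bdd unfolding L_def by (auto intro: cInf_lower)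
  have "V s - V t < \<eta>" if "T \<le> s" "s \<le> t" for s t
  proof -
    have "V s \<le> V T" "L \<le> V t" using antimono[of T s] L[of t] T(1) that by auto
    with T(2) show ?thesis by linarith
  qed
  with T(1) show ?thesis by blast
qed

lemma dissipation_tendsto_zero:
  fixes V V' g g' :: "real \<Rightarrow> real"
  assumes X: "countable X"
    and V_cont: "continuous_on {a..} V" and g_cont: "continuous_on {a..} g"
    and V_der: "\<And>t. a < t \<Longrightarrow> t \<notin> X \<Longrightarrow> (V has_real_derivative V' t) (at t)"
    and g_der: "\<And>t. a < t \<Longrightarrow> t \<notin> X \<Longrightarrow> (g has_real_derivative g' t) (at t)"
    and dissipation: "\<And>t. a < t \<Longrightarrow> t \<notin> X \<Longrightarrow> V' t \<le> - c * (g t)\<^sup>2" and "c > 0"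
    and V_nonneg: "\<And>t. a \<le> t \<Longrightarrow> 0 \<le> V t"
    and g'_bounded: "bounded (g' ` {a..})"
  shows "(g \<longlongrightarrow> 0) at_top"
proof (rule tendstoI)
  fix \<delta> :: real assume "\<delta> > 0"
  obtain B where B: "B > 0" "\<And>t. a \<le> t \<Longrightarrow> \<bar>g' t\<bar> \<le> B"
    using g'_bounded unfolding bounded_pos by auto
  have V_antimono: "V t \<le> V s" if "a \<le> s" "s \<le> t" for s t
  proof (rule DERIV_nonpos_imp_decreasing_countable[OF that(2) continuous_on_subset[OF V_cont] X V_der])
    show "V' r \<le> 0" if "s < r" "r < t" "r \<notin> X" for r
    proof -
      have "V' r \<le> - c * (g r)\<^sup>2" using dissipation[of r] that \<open>a \<le> s\<close> by simp
      moreover have "0 \<le> c * (g r)\<^sup>2" using \<open>c > 0\<close> by simp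
      ultimately show ?thesis by linarith
    qed
  qed (use that in auto)
  define h where "h = \<delta> / (2 * B)"
  define \<eta> where "\<eta> = c * (\<delta>/2)\<^sup>2 * h"
  have "h > 0" "\<eta> > 0" using \<open>\<delta> > 0\<close> \<open>c > 0\<close> B by (auto simp: h_def \<eta>_def)
  obtain T where T: "a \<le> T" "\<And>s t. T \<le> s \<Longrightarrow> s \<le> t \<Longrightarrow> V s - V t < \<eta>"
    using antimono_eventually_small_decrease[of a V \<eta>] V_antimono V_nonneg \<open>\<eta> > 0\<close> by blast
  \<comment> \<open>If |g t| \<ge> \<delta>, then |g| \<ge> \<delta>/2 on [t, t + h], so V drops by \<eta> there.\<close>
  show "\<forall>\<^sub>F t in at_top. dist (g t) 0 < \<delta>"
    unfolding eventually_at_top_linorder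
  proof (intro exI[of _ T] allI impI)
    fix t assume "T \<le> t"
    show "dist (g t) 0 < \<delta>"
    proof (rule ccontr)
      assume "\<not> dist (g t) 0 < \<delta>"
      hence "\<delta> \<le> \<bar>g t\<bar>" by simp
      have "\<delta>/2 \<le> \<bar>g s\<bar>" if "t \<le> s" "s \<le> t + h" for s
      proof -
        have "\<bar>g s - g t\<bar> \<le> B * (s - t)"
          using that T \<open>T \<le> t\<close> B
          by (intro abs_increment_le_countable[OF _ continuous_on_subset[OF g_cont] X g_der]) auto
        also have "\<dots> \<le> B * h" using that B by (intro mult_left_mono) auto
        finally have "\<bar>g s - g t\<bar> \<le> \<delta>/2" using B by (simp add: h_def)
        thus ?thesis
          using \<open>\<delta> \<le> \<bar>g t\<bar>\<close> abs_triangle_ineq2[of "g t" "g s"] abs_minus_commute[of "g t" "g s"] by linarith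
      qed
      have "V' s \<le> - c * (\<delta>/2)\<^sup>2" if "t < s" "s < t + h" "s \<notin> X" for s
      proof -
        have "(\<delta>/2)\<^sup>2 \<le> \<bar>g s\<bar>\<^sup>2"
          using \<open>t < s\<close> \<open>s < t + h\<close> \<open>\<delta> > 0\<close> by (intro power_mono \<open>\<And>s. _ \<Longrightarrow> _ \<Longrightarrow> \<delta>/2 \<le> \<bar>g s\<bar>\<close>) auto
        hence "c * (\<delta>/2)\<^sup>2 \<le> c * (g s)\<^sup>2" using \<open>c > 0\<close> by simp
        thus ?thesis using dissipation[of s] that T \<open>T \<le> t\<close> by simp
      qed
      hence "V (t + h) - V t \<le> - c * (\<delta>/2)\<^sup>2 * ((t + h) - t)"
        using T \<open>T \<le> t\<close> \<open>h > 0\<close>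
        by (intro increment_le_countable[OF _ continuous_on_subset[OF V_cont] X V_der]) auto
      with T(2)[of t "t + h"] \<open>T \<le> t\<close> \<open>h > 0\<close> show False by (simp add: \<eta>_def)
    qed
  qed
qed

lemma tendsto_zero_of_derivative_close:
  fixes g g' h h' :: "real \<Rightarrow> real"
  assumes X: "countable X" and g_cont: "continuous_on {a..} g" and h_cont: "continuous_on {a..} h"
    and g_der: "\<And>t. a < t \<Longrightarrow> t \<notin> X \<Longrightarrow> (g has_real_derivative g' t) (at t)"
    and h_der: "\<And>t. a < t \<Longrightarrow> t \<notin> X \<Longrightarrow> (h has_real_derivative h' t) (at t)"
    and g_lim: "(g \<longlongrightarrow> 0) at_top" and close: "((\<lambda>t. g' t - h t) \<longlongrightarrow> 0) at_top"
    and h'_lim: "(h' \<longlongrightarrow> 0) at_top"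
  shows "(h \<longlongrightarrow> 0) at_top"
proof (rule tendstoI)
  fix \<epsilon> :: real assume "\<epsilon> > 0"
  have "\<epsilon>/4 > 0" "\<epsilon>/8 > 0" using \<open>\<epsilon> > 0\<close> by auto
  have "\<forall>\<^sub>F t in at_top. \<bar>g' t - h t\<bar> < \<epsilon>/4 \<and> \<bar>h' t\<bar> < \<epsilon>/4 \<and> \<bar>g t\<bar> < \<epsilon>/8"
    using tendstoD[OF close \<open>\<epsilon>/4 > 0\<close>] tendstoD[OF h'_lim \<open>\<epsilon>/4 > 0\<close>] tendstoD[OF g_lim \<open>\<epsilon>/8 > 0\<close>]
    by eventually_elim simp
  hence "\<forall>\<^sub>F t in at_top. \<forall>s\<ge>t. \<bar>g' s - h s\<bar> < \<epsilon>/4 \<and> \<bar>h' s\<bar> < \<epsilon>/4 \<and> \<bar>g s\<bar> < \<epsilon>/8"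
    by (rule eventually_all_ge_at_top)
  with eventually_ge_at_top[of a] show "\<forall>\<^sub>F t in at_top. dist (h t) 0 < \<epsilon>"
  proof eventually_elim
    case (elim t)
    \<comment> \<open>On [t, t+1] h stays within \<epsilon>/4 of h t, so g' stays within \<epsilon>/2 of h t.\<close>
    have "\<bar>h s - h t\<bar> \<le> \<epsilon>/4" if "t \<le> s" "s \<le> t + 1" for s
    proof -
      have "\<bar>h s - h t\<bar> \<le> \<epsilon>/4 * (s - t)"
        using elim that by (intro abs_increment_le_countable[OF _ continuous_on_subset[OF h_cont] X h_der])
          (auto intro: less_imp_le)
      also have "\<dots> \<le> \<epsilon>/4" using that \<open>\<epsilon> > 0\<close> by (simp add: mult_left_le)
      finally show ?thesis .
    qed
    hence "\<bar>g' s - h t\<bar> \<le> \<epsilon>/2" if "t < s" "s < t + 1" for s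
    proof -
      have "\<bar>g' s - h s\<bar> < \<epsilon>/4" "\<bar>h s - h t\<bar> \<le> \<epsilon>/4"
        using elim that \<open>\<And>s. t \<le> s \<Longrightarrow> s \<le> t + 1 \<Longrightarrow> \<bar>h s - h t\<bar> \<le> \<epsilon>/4\<close> by auto
      thus ?thesis using dist_triangle[of "g' s" "h t" "h s"] unfolding dist_real_def by linarith
    qed
    moreover have "continuous_on {t..t + 1} (\<lambda>s. g s - h t * s)"
      using elim by (intro continuous_intros continuous_on_subset[OF g_cont]) auto
    moreover have "((\<lambda>s. g s - h t * s) has_real_derivative g' s - h t) (at s)"
      if "t < s" "s \<notin> X" for s
      using elim that by (auto intro!: derivative_eq_intros g_der)
    ultimately have "\<bar>(g (t + 1) - h t * (t + 1)) - (g t - h t * t)\<bar> \<le> \<epsilon>/2 * ((t + 1) - t)"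
      by (intro abs_increment_le_countable[OF _ _ X]) auto
    hence "\<bar>g (t + 1) - g t - h t\<bar> \<le> \<epsilon>/2" by (simp add: algebra_simps)
    moreover have "\<bar>g (t + 1)\<bar> < \<epsilon>/8" "\<bar>g t\<bar> < \<epsilon>/8" using elim by auto
    ultimately show ?case by (simp only: abs_le_iff abs_less_iff dist_real_def diff_0_right) linarith
  qed
qed

lemma finite_family_convergent_subseq:
  fixes x :: "nat \<Rightarrow> 'a \<Rightarrow> real"
  assumes "finite E" and "\<And>n e. e \<in> E \<Longrightarrow> \<bar>x n e\<bar> \<le> B e"
  shows "\<exists>r. strict_mono r \<and> (\<forall>e\<in>E. convergent (\<lambda>n. x (r n) e))"
  using assms
proof (induction E rule: finite_induct)
  case empty
  show ?case by (intro exI[of _ id]) (auto simp: strict_mono_def)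
next
  case (insert e0 E)
  then obtain r where r: "strict_mono r" "\<forall>e\<in>E. convergent (\<lambda>n. x (r n) e)" by auto
  obtain r2 where r2: "strict_mono r2" "monoseq (\<lambda>n. x (r (r2 n)) e0)"
    using seq_monosub[of "\<lambda>n. x (r n) e0"] by (auto simp: o_def)
  have "Bseq (\<lambda>n. x (r (r2 n)) e0)"
    using insert.prems by (intro BseqI'[of _ "B e0"]) auto
  hence "convergent (\<lambda>n. x (r (r2 n)) e0)" using Bseq_monoseq_convergent r2 by blast
  moreover have "convergent (\<lambda>n. x (r (r2 n)) e)" if "e \<in> E" for e
    using convergent_subseq_convergent[OF r(2)[rule_format, OF that] r2(1)] by (simp add: o_def)
  ultimately show ?case using r r2 by (intro exI[of _ "r \<circ> r2"]) (auto simp: strict_mono_def)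
qed

lemma bounded_sum_comp:
  fixes g :: "'a \<Rightarrow> 'b \<Rightarrow> 'c::real_normed_vector"
  assumes "finite A" and "\<And>a. a \<in> A \<Longrightarrow> bounded ((\<lambda>x. g a x) ` S)"
  shows "bounded ((\<lambda>x. \<Sum>a\<in>A. g a x) ` S)"
  using assms
proof (induction A rule: finite_induct)
  case empty
  show ?case by (rule bounded_subset[of "{0}"]) auto
qed (auto intro: bounded_plus_comp)

lemma bounded_abs_le_comp:
  fixes g h :: "'a \<Rightarrow> real"
  assumes "bounded (g ` S)" and "\<And>x. x \<in> S \<Longrightarrow> \<bar>h x\<bar> \<le> g x"
  shows "bounded (h ` S)"
  using assms unfolding bounded_real by (metis abs_ge_self image_eqI imageE order_trans)

lemma bounded_abs_comp:
  fixes g :: "'a \<Rightarrow> real"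
  shows "bounded (g ` S) \<Longrightarrow> bounded ((\<lambda>x. \<bar>g x\<bar>) ` S)"
  using bounded_norm_comp[of g S] by simp

lemma bounded_cmult_comp:
  fixes g :: "'a \<Rightarrow> real"
  shows "bounded (g ` S) \<Longrightarrow> bounded ((\<lambda>x. c * g x) ` S)"
  using bounded_scaleR_comp[of g S c] by simp

lemma bounded_const_comp: "bounded ((\<lambda>x. c) ` S)"
  by (rule bounded_subset[of "{c}"]) auto

lemma bounded_of_square_le:
  fixes g :: "'a \<Rightarrow> real"
  assumes "c > 0" and "\<And>x. x \<in> S \<Longrightarrow> c * (g x)\<^sup>2 \<le> K"
  shows "bounded (g ` S)"
  unfolding bounded_real
proof (intro exI ballI)
  fix y assume "y \<in> g ` S"
  then obtain x where "x \<in> S" "y = g x" by auto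
  with assms have "y\<^sup>2 \<le> K / c" by (simp add: field_simps mult.commute)
  thus "\<bar>y\<bar> \<le> sqrt (K / c)" using real_sqrt_le_mono real_sqrt_abs by metis
qed

lemma sum_nonpos_le_member:
  fixes g :: "'a \<Rightarrow> real"
  assumes "finite A" and "j \<in> A" and "\<And>i. i \<in> A \<Longrightarrow> g i \<le> 0"
  shows "sum g A \<le> g j"
  using member_le_sum[of j A "\<lambda>i. - g i"] assms by (simp add: sum_negf)

section \<open>Flows on oriented graphs\<close>

lemma sum_mult_sum_incident:
  fixes w :: "'v \<Rightarrow> real" and g :: "'e \<Rightarrow> real" and \<pi> :: "'e \<Rightarrow> 'v"
  assumes "finite N" and "finite E" and "\<pi> ` E \<subseteq> N"
  shows "(\<Sum>i\<in>N. w i * (\<Sum>e\<in>{e\<in>E. \<pi> e = i}. g e)) = (\<Sum>e\<in>E. w (\<pi> e) * g e)"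
proof -
  have "(\<Sum>i\<in>N. w i * (\<Sum>e\<in>{e\<in>E. \<pi> e = i}. g e)) = (\<Sum>i\<in>N. \<Sum>e\<in>{e\<in>E. \<pi> e = i}. w (\<pi> e) * g e)"
    by (simp add: sum_distrib_left)
  also have "\<dots> = (\<Sum>e\<in>E. w (\<pi> e) * g e)" using assms(2,1,3) by (rule sum.group)
  finally show ?thesis .
qed

lemma sum_potential_difference_eq_flow_out:
  fixes w :: "'v \<Rightarrow> real"
  assumes "finite N" and "finite E" and "E \<subseteq> N \<times> N"
  shows "(\<Sum>e\<in>E. g e * (w (fst e) - w (snd e))) = (\<Sum>i\<in>N. w i * flow_out E g i)"
  using sum_mult_sum_incident[OF assms(1,2), of fst w g] sum_mult_sum_incident[OF assms(1,2), of snd w g]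
    assms(3)
  by (force simp: flow_out_def right_diff_distrib sum_subtractf algebra_simps)

lemma flow_out_diff: "flow_out E (\<lambda>e. g e - h e) i = flow_out E g i - flow_out E h i"
  by (simp add: flow_out_def sum_subtractf)

lemma tendsto_flow_out:
  assumes "finite E" and "\<And>e. e \<in> E \<Longrightarrow> ((\<lambda>t. g t e) \<longlongrightarrow> l e) F"
  shows "((\<lambda>t. flow_out E (g t) i) \<longlongrightarrow> flow_out E l i) F"
  unfolding flow_out_def using assms by (intro tendsto_diff tendsto_sum) auto

lemma continuous_on_flow_out:
  assumes "finite E" and "\<And>e. e \<in> E \<Longrightarrow> continuous_on S (\<lambda>t. g t e)"
  shows "continuous_on S (\<lambda>t. flow_out E (g t) i)"
  unfolding flow_out_def using assms by (intro continuous_intros) auto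

lemma has_real_derivative_flow_out:
  assumes "finite E" and "\<And>e. e \<in> E \<Longrightarrow> ((\<lambda>s. g s e) has_real_derivative g' e) (at t)"
  shows "((\<lambda>s. flow_out E (g s) i) has_real_derivative flow_out E g' i) (at t)"
  unfolding flow_out_def using assms by (intro DERIV_diff DERIV_sum) auto

lemma bounded_flow_out_comp:
  assumes "finite E" and "\<And>e. e \<in> E \<Longrightarrow> bounded ((\<lambda>t. g t e) ` S)"
  shows "bounded ((\<lambda>t. flow_out E (g t) i) ` S)"
  unfolding flow_out_def using assms by (intro bounded_minus_comp bounded_sum_comp) auto

lemma circulation_weighted_sum_const:
  fixes f :: "real \<Rightarrow> 'v \<times> 'v \<Rightarrow> real" and w :: "real \<Rightarrow> 'v \<Rightarrow> real"
  assumes N: "finite N" and E: "finite E" "E \<subseteq> N \<times> N" and k: "\<And>e. e \<in> E \<Longrightarrow> k e > 0"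
    and circulation: "\<And>i. i \<in> N \<Longrightarrow> flow_out E c i = 0"
    and X: "countable X" and cont: "\<And>e. e \<in> E \<Longrightarrow> continuous_on {a..} (\<lambda>t. f t e)"
    and der: "\<And>t e. a < t \<Longrightarrow> t \<notin> X \<Longrightarrow> e \<in> E \<Longrightarrow>
               ((\<lambda>s. f s e) has_real_derivative k e * (w t (fst e) - w t (snd e))) (at t)"
    and "a \<le> t"
  shows "(\<Sum>e\<in>E. c e * f t e / k e) = (\<Sum>e\<in>E. c e * f a e / k e)"
proof -
  define Q where "Q s = (\<Sum>e\<in>E. c e * f s e / k e)" for s
  have "continuous_on {a..t} Q"
    unfolding Q_def using k by (intro continuous_intros continuous_on_subset[OF cont]) force+
  moreover have "(Q has_real_derivative 0) (at s)" if "a < s" "s \<notin> X" for s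
  proof -
    have "(Q has_real_derivative (\<Sum>e\<in>E. c e * (k e * (w s (fst e) - w s (snd e))) / k e)) (at s)"
      unfolding Q_def by (intro DERIV_sum DERIV_cdivide DERIV_cmult der that)
    also have "(\<Sum>e\<in>E. c e * (k e * (w s (fst e) - w s (snd e))) / k e)
        = (\<Sum>e\<in>E. c e * (w s (fst e) - w s (snd e)))"
      using k by (intro sum.cong) (auto simp: less_imp_neq[symmetric])
    also have "\<dots> = (\<Sum>i\<in>N. w s i * flow_out E c i)" by (rule sum_potential_difference_eq_flow_out[OF N E])
    also have "\<dots> = 0" using circulation by simp
    finally show ?thesis .
  qed
  ultimately have "\<bar>Q t - Q a\<bar> \<le> 0 * (t - a)"
    using \<open>a \<le> t\<close> by (intro abs_increment_le_countable[OF _ _ X]) auto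
  thus ?thesis unfolding Q_def by simp
qed

lemma flow_out_tendsto_of_frequency_tendsto:
  fixes f :: "real \<Rightarrow> 'v \<times> 'v \<Rightarrow> real" and w :: "real \<Rightarrow> 'v \<Rightarrow> real"
  assumes E: "finite E" "E \<subseteq> N \<times> N" and "i \<in> N" and X: "countable X"
    and f_cont: "\<And>e. e \<in> E \<Longrightarrow> continuous_on {a..} (\<lambda>t. f t e)"
    and w_cont: "continuous_on {a..} (\<lambda>t. w t i)"
    and f_der: "\<And>t e. a < t \<Longrightarrow> t \<notin> X \<Longrightarrow> e \<in> E \<Longrightarrow>
                 ((\<lambda>s. f s e) has_real_derivative k e * (w t (fst e) - w t (snd e))) (at t)"
    and w_der: "\<And>t. a < t \<Longrightarrow> t \<notin> X \<Longrightarrow>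
                 ((\<lambda>s. w s i) has_real_derivative (- c * w t i - flow_out E (f t) i + r t) / m) (at t)"
    and w_lim: "\<And>j. j \<in> N \<Longrightarrow> ((\<lambda>t. w t j) \<longlongrightarrow> 0) at_top"
    and r_lim: "(r \<longlongrightarrow> q) at_top" and "m \<noteq> 0"
  shows "((\<lambda>t. flow_out E (f t) i) \<longlongrightarrow> q) at_top"
proof -
  define h where "h t = (q - flow_out E (f t) i) / m" for t
  define h' where "h' t = - flow_out E (\<lambda>e. k e * (w t (fst e) - w t (snd e))) i / m" for t
  have "(h \<longlongrightarrow> 0) at_top"
  proof (rule tendsto_zero_of_derivative_close[OF X w_cont _ w_der _ w_lim[OF \<open>i \<in> N\<close>]])
    show "continuous_on {a..} h"
      unfolding h_def by (intro continuous_intros continuous_on_flow_out E f_cont) (use \<open>m \<noteq> 0\<close> in auto)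
    show "(h has_real_derivative h' t) (at t)" if "a < t" "t \<notin> X" for t
      unfolding h_def h'_def using that \<open>m \<noteq> 0\<close>
      by (auto intro!: derivative_eq_intros has_real_derivative_flow_out E f_der)
    have "((\<lambda>t. (- c * w t i + (r t - q)) / m) \<longlongrightarrow> (- c * 0 + (q - q)) / m) at_top"
      by (intro tendsto_intros w_lim[OF \<open>i \<in> N\<close>] r_lim \<open>m \<noteq> 0\<close>)
    thus "((\<lambda>t. (- c * w t i - flow_out E (f t) i + r t) / m - h t) \<longlongrightarrow> 0) at_top"
      unfolding h_def by (simp add: diff_divide_distrib add_divide_distrib algebra_simps)
    have "((\<lambda>t. flow_out E (\<lambda>e. k e * (w t (fst e) - w t (snd e))) i) \<longlongrightarrow>
        flow_out E (\<lambda>e. k e * (0 - 0)) i) at_top"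
      using E by (intro tendsto_flow_out tendsto_intros w_lim) auto
    hence "(h' \<longlongrightarrow> - flow_out E (\<lambda>e. k e * (0 - 0)) i / m) at_top"
      unfolding h'_def by (intro tendsto_intros \<open>m \<noteq> 0\<close>)
    thus "(h' \<longlongrightarrow> 0) at_top" by (simp add: flow_out_def)
  qed
  hence "((\<lambda>t. q - m * h t) \<longlongrightarrow> q - m * 0) at_top" by (intro tendsto_intros)
  thus ?thesis unfolding h_def using \<open>m \<noteq> 0\<close> by simp
qed

lemma orthogonal_circulation_limit_eq_0:
  fixes y :: "nat \<Rightarrow> 'v \<times> 'v \<Rightarrow> real"
  assumes E: "finite E" and k: "\<And>e. e \<in> E \<Longrightarrow> k e > 0"
    and lim: "\<And>e. e \<in> E \<Longrightarrow> (\<lambda>n. y n e) \<longlonglongrightarrow> G e"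
    and flow_out_lim: "\<And>i. i \<in> N \<Longrightarrow> (\<lambda>n. flow_out E (y n) i) \<longlonglongrightarrow> 0"
    and orthogonal: "\<And>c n. (\<And>i. i \<in> N \<Longrightarrow> flow_out E c i = 0) \<Longrightarrow> (\<Sum>e\<in>E. c e * y n e / k e) = 0"
    and "e0 \<in> E"
  shows "G e0 = 0"
proof -
  \<comment> \<open>G is a circulation orthogonal to itself in the 1/k-weighted inner product.\<close>
  have "flow_out E G i = 0" if "i \<in> N" for i
    using LIMSEQ_unique[OF tendsto_flow_out[OF E lim] flow_out_lim[OF that]] .
  hence "(\<Sum>e\<in>E. G e * y n e / k e) = 0" for n by (rule orthogonal)
  moreover have "(\<lambda>n. \<Sum>e\<in>E. G e * y n e / k e) \<longlonglongrightarrow> (\<Sum>e\<in>E. G e * G e / k e)"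
    using k by (intro tendsto_sum tendsto_intros lim) (metis less_irrefl)+
  ultimately have "(\<lambda>n. 0) \<longlonglongrightarrow> (\<Sum>e\<in>E. G e * G e / k e)" by simp
  hence "(\<Sum>e\<in>E. G e * G e / k e) = 0" by (rule LIMSEQ_unique[OF _ tendsto_const])
  moreover have nonneg: "0 \<le> G e * G e / k e" if "e \<in> E" for e using k[OF that] by simp
  ultimately have "G e0 * G e0 / k e0 = 0" using sum_nonneg_eq_0_iff[OF E nonneg] \<open>e0 \<in> E\<close> by simp
  thus ?thesis using k[OF \<open>e0 \<in> E\<close>] by simp
qed

lemma flow_tendsto_zero_of_flow_out_tendsto_zero:
  fixes x :: "real \<Rightarrow> 'v \<times> 'v \<Rightarrow> real"
  assumes E: "finite E" and k: "\<And>e. e \<in> E \<Longrightarrow> k e > 0"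
    and bounded: "\<And>e. e \<in> E \<Longrightarrow> bounded ((\<lambda>t. x t e) ` {a..})"
    and flow_out_lim: "\<And>i. i \<in> N \<Longrightarrow> ((\<lambda>t. flow_out E (x t) i) \<longlongrightarrow> 0) at_top"
    and orthogonal: "\<And>c t. (\<And>i. i \<in> N \<Longrightarrow> flow_out E c i = 0) \<Longrightarrow> a \<le> t \<Longrightarrow>
                       (\<Sum>e\<in>E. c e * x t e / k e) = 0"
    and "e0 \<in> E"
  shows "((\<lambda>t. x t e0) \<longlongrightarrow> 0) at_top"
proof (rule ccontr)
  assume "\<not> ((\<lambda>t. x t e0) \<longlongrightarrow> 0) at_top"
  then obtain \<delta> where "\<delta> > 0" and "\<not> (\<forall>\<^sub>F t in at_top. dist (x t e0) 0 < \<delta>)"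
    unfolding tendsto_iff by auto
  hence "\<forall>T. \<exists>t\<ge>T. \<delta> \<le> \<bar>x t e0\<bar>"
    unfolding eventually_at_top_linorder by (auto simp: not_less)
  hence "\<forall>n::nat. \<exists>t. max a (real n) \<le> t \<and> \<delta> \<le> \<bar>x t e0\<bar>" by blast
  then obtain tt where tt: "\<And>n. max a (real n) \<le> tt n" "\<And>n. \<delta> \<le> \<bar>x (tt n) e0\<bar>" by metis
  have tt_lim: "filterlim tt at_top sequentially"
    using tt(1) by (intro filterlim_at_top_mono[OF filterlim_real_sequentially]) auto
  have "\<forall>e\<in>E. \<exists>b. \<forall>t\<in>{a..}. \<bar>x t e\<bar> \<le> b" using bounded by (simp add: bounded_real)
  then obtain B where B: "\<forall>e\<in>E. \<forall>t\<in>{a..}. \<bar>x t e\<bar> \<le> B e" by (metis bchoice)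
  moreover have tt_ge: "a \<le> tt n" for n using tt(1)[of n] by simp
  ultimately have x_bounded: "\<bar>x (tt n) e\<bar> \<le> B e" if "e \<in> E" for n e using that by blast
  obtain r where r: "strict_mono r" "\<forall>e\<in>E. convergent (\<lambda>n. x (tt (r n)) e)"
    using finite_family_convergent_subseq[of E "\<lambda>n. x (tt n)" B] E x_bounded by blast
  define G where "G e = lim (\<lambda>n. x (tt (r n)) e)" for e
  have G: "(\<lambda>n. x (tt (r n)) e) \<longlonglongrightarrow> G e" if "e \<in> E" for e
    using r(2) that unfolding G_def by (simp add: convergent_LIMSEQ_iff)
  have "G e0 = 0"
  proof (rule orthogonal_circulation_limit_eq_0[OF E k G _ _ \<open>e0 \<in> E\<close>])
    show "(\<lambda>n. flow_out E (x (tt (r n))) i) \<longlonglongrightarrow> 0" if "i \<in> N" for i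
      using filterlim_compose[OF flow_out_lim[OF that] filterlim_compose[OF tt_lim filterlim_subseq[OF r(1)]]]
      by (simp add: o_def)
    show "(\<Sum>e\<in>E. c e * x (tt (r n)) e / k e) = 0" if "\<And>i. i \<in> N \<Longrightarrow> flow_out E c i = 0" for c n
      using that tt_ge by (rule orthogonal)
  qed
  moreover have "\<delta> \<le> \<bar>G e0\<bar>"
    using tt(2) by (intro LIMSEQ_le_const[OF tendsto_rabs[OF G[OF \<open>e0 \<in> E\<close>]]]) auto
  ultimately show False using \<open>\<delta> > 0\<close> by simp
qed

section \<open>The top-layer controller and the filter\<close>

lemma alpha_df_eq_0:
  assumes "thlo S i \<le> w t i" and "w t i \<le> thhi S i"
  shows "alpha_df S p f w aM t i = 0"
  using assms by (simp add: alpha_df_def Let_def)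

lemma w_mult_alpha_df_nonpos:
  assumes "i \<in> Iw S \<Longrightarrow> thlo S i < 0" and "i \<in> Iw S \<Longrightarrow> 0 < thhi S i"
  shows "w t i * alpha_df S p f w aM t i \<le> 0"
  using assms by (auto simp: alpha_df_def Let_def mult_nonneg_nonpos mult_nonpos_nonneg)

lemma abs_alpha_df_le:
  assumes "wlo S i < thlo S i" and "thhi S i < whi S i" and "0 < glo S i" and "0 < ghi S i"
  shows "\<bar>alpha_df S p f w aM t i\<bar>
           \<le> \<bar>Ei S i * w t i + flow_out (edges S) (f t) i - p t i - aM t i\<bar> + ghi S i + glo S i"
proof -
  \<comment> \<open>The barrier terms are bounded on the side where they can become active.\<close>
  have "ghi S i * (whi S i - w t i) / (w t i - thhi S i) \<ge> - ghi S i" if "w t i > thhi S i"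
  proof -
    have "ghi S i * (whi S i - w t i) / (w t i - thhi S i) + ghi S i
        = ghi S i * (whi S i - thhi S i) / (w t i - thhi S i)" using that by (simp add: field_simps)
    also have "\<dots> \<ge> 0" using assms that by simp
    finally show ?thesis by simp
  qed
  moreover have "glo S i * (wlo S i - w t i) / (thlo S i - w t i) \<le> glo S i" if "w t i < thlo S i"
  proof -
    have "glo S i * (wlo S i - w t i) / (thlo S i - w t i) - glo S i
        = glo S i * (wlo S i - thlo S i) / (thlo S i - w t i)" using that by (simp add: field_simps)
    also have "\<dots> \<le> 0" using assms that by (simp add: divide_nonpos_pos mult_pos_neg less_imp_le)
    finally show ?thesis by simp
  qed
  ultimately show ?thesis using assms by (auto simp: alpha_df_def Let_def abs_le_iff min_def max_def)
qed

lemma power_balance_nonpos_above_band: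
  assumes "i \<in> Iw S" and "thhi S i < whi S i" and "0 < ghi S i" and "whi S i < w t i"
  shows "- Ei S i * w t i - flow_out (edges S) (f t) i + p t i + (alpha_df S p f w aM t i + aM t i) \<le> 0"
proof -
  define v where "v = Ei S i * w t i + flow_out (edges S) (f t) i - p t i - aM t i"
  define b where "b = ghi S i * (whi S i - w t i) / (w t i - thhi S i)"
  have "b < 0" using assms by (simp add: b_def divide_neg_pos mult_pos_neg)
  moreover have "alpha_df S p f w aM t i = min 0 (b + v)"
    using assms by (simp add: alpha_df_def Let_def b_def v_def)
  ultimately show ?thesis by (simp add: v_def min_def)
qed

lemma power_balance_nonneg_below_band:
  assumes "i \<in> Iw S" and "wlo S i < thlo S i" and "thlo S i < thhi S i" and "0 < glo S i"
    and "w t i < wlo S i"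
  shows "- Ei S i * w t i - flow_out (edges S) (f t) i + p t i + (alpha_df S p f w aM t i + aM t i) \<ge> 0"
proof -
  define v where "v = Ei S i * w t i + flow_out (edges S) (f t) i - p t i - aM t i"
  define b where "b = glo S i * (wlo S i - w t i) / (thlo S i - w t i)"
  have "b > 0" using assms by (simp add: b_def)
  moreover have "alpha_df S p f w aM t i = max 0 (b + v)"
    using assms by (simp add: alpha_df_def Let_def b_def v_def)
  ultimately show ?thesis by (simp add: v_def max_def)
qed

lemma abs_clamp_u_le: "0 \<le> eps S i \<Longrightarrow> \<bar>clamp_u S i a v\<bar> \<le> eps S i * \<bar>a\<bar>"
  unfolding clamp_u_def by (simp add: max_def min_def abs_le_iff)

lemma open_loop_solutionE:
  assumes "open_loop_solution S p f w"
  obtains X where "countable X"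
    and "\<And>e. e \<in> edges S \<Longrightarrow> continuous_on {0..} (\<lambda>t. f t e)"
    and "\<And>i. i \<in> nodes S \<Longrightarrow> continuous_on {0..} (\<lambda>t. w t i)"
    and "\<And>t e. 0 < t \<Longrightarrow> t \<notin> X \<Longrightarrow> e \<in> edges S \<Longrightarrow>
           ((\<lambda>s. f s e) has_real_derivative yb S e * (w t (fst e) - w t (snd e))) (at t)"
    and "\<And>t i. 0 < t \<Longrightarrow> t \<notin> X \<Longrightarrow> i \<in> nodes S \<Longrightarrow> ((\<lambda>s. w s i) has_real_derivative
           (- Ei S i * w t i - flow_out (edges S) (f t) i + p t i) / Mi S i) (at t)"
proof -
  from assms obtain X where "countable X" and D: "\<forall>t>0. t \<notin> X \<longrightarrow>
      (\<forall>e\<in>edges S. ((\<lambda>s. f s e) has_real_derivative yb S e * (w t (fst e) - w t (snd e))) (at t))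
    \<and> (\<forall>i\<in>nodes S. ((\<lambda>s. w s i) has_real_derivative
           (- Ei S i * w t i - flow_out (edges S) (f t) i + p t i) / Mi S i) (at t))"
    unfolding open_loop_solution_def by (elim conjE exE)
  with assms show thesis unfolding open_loop_solution_def by (intro that) auto
qed

locale power_network =
  fixes S :: "'v sys" and p :: "real \<Rightarrow> 'v \<Rightarrow> real" and pstar :: "'v \<Rightarrow> real" and tbar :: real
  assumes finite_nodes: "finite (nodes S)"
    and edges_subset: "edges S \<subseteq> nodes S \<times> nodes S"
    and M_pos: "\<And>i. i \<in> nodes S \<Longrightarrow> 0 < Mi S i"
    and E_pos: "\<And>i. i \<in> nodes S \<Longrightarrow> 0 < Ei S i"
    and yb_pos: "\<And>e. e \<in> edges S \<Longrightarrow> 0 < yb S e"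
    and tbar_nonneg: "0 \<le> tbar"
    and p_eventually_const: "\<And>t i. tbar \<le> t \<Longrightarrow> i \<in> nodes S \<Longrightarrow> p t i = pstar i"
begin

lemma finite_edges: "finite (edges S)"
  using finite_subset[OF edges_subset] finite_nodes by blast

lemma p_tendsto:
  assumes "i \<in> nodes S"
  shows "((\<lambda>t. p t i) \<longlongrightarrow> pstar i) at_top"
proof (rule tendsto_eventually)
  show "\<forall>\<^sub>F t in at_top. p t i = pstar i"
    using eventually_ge_at_top[of tbar] by eventually_elim (simp add: p_eventually_const assms)
qed

lemma open_loop_limit:
  assumes sol: "open_loop_solution S p fo wo"
    and fo_lim: "\<And>e. e \<in> edges S \<Longrightarrow> ((\<lambda>t. fo t e) \<longlongrightarrow> finf e) at_top"
    and wo_lim: "\<And>i. i \<in> nodes S \<Longrightarrow> ((\<lambda>t. wo t i) \<longlongrightarrow> 0) at_top"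
  shows open_loop_limit_balanced: "\<And>i. i \<in> nodes S \<Longrightarrow> flow_out (edges S) finf i = pstar i"
    and open_loop_limit_circulation: "\<And>c. (\<And>i. i \<in> nodes S \<Longrightarrow> flow_out (edges S) c i = 0) \<Longrightarrow>
          (\<Sum>e\<in>edges S. c e * finf e / yb S e) = (\<Sum>e\<in>edges S. c e * fo 0 e / yb S e)"
proof -
  from sol obtain X where X: "countable X"
    and fo_cont: "\<And>e. e \<in> edges S \<Longrightarrow> continuous_on {0..} (\<lambda>t. fo t e)"
    and wo_cont: "\<And>i. i \<in> nodes S \<Longrightarrow> continuous_on {0..} (\<lambda>t. wo t i)"
    and fo_der: "\<And>t e. 0 < t \<Longrightarrow> t \<notin> X \<Longrightarrow> e \<in> edges S \<Longrightarrow>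
          ((\<lambda>s. fo s e) has_real_derivative yb S e * (wo t (fst e) - wo t (snd e))) (at t)"
    and wo_der: "\<And>t i. 0 < t \<Longrightarrow> t \<notin> X \<Longrightarrow> i \<in> nodes S \<Longrightarrow> ((\<lambda>s. wo s i) has_real_derivative
          (- Ei S i * wo t i - flow_out (edges S) (fo t) i + p t i) / Mi S i) (at t)"
    by (rule open_loop_solutionE) (rule that)
  show "flow_out (edges S) finf i = pstar i" if "i \<in> nodes S" for i
  proof -
    have "((\<lambda>t. flow_out (edges S) (fo t) i) \<longlongrightarrow> pstar i) at_top"
    proof (rule flow_out_tendsto_of_frequency_tendsto[OF finite_edges edges_subset \<open>i \<in> nodes S\<close> X _ _ _ _
          wo_lim p_tendsto[OF \<open>i \<in> nodes S\<close>]])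
      show "continuous_on {tbar..} (\<lambda>t. fo t e)" if "e \<in> edges S" for e
        using tbar_nonneg by (intro continuous_on_subset[OF fo_cont[OF that]]) auto
      show "continuous_on {tbar..} (\<lambda>t. wo t i)"
        using tbar_nonneg by (intro continuous_on_subset[OF wo_cont[OF \<open>i \<in> nodes S\<close>]]) auto
      show "((\<lambda>s. fo s e) has_real_derivative yb S e * (wo t (fst e) - wo t (snd e))) (at t)"
        if "tbar < t" "t \<notin> X" "e \<in> edges S" for t e
        using fo_der that tbar_nonneg by auto
      show "((\<lambda>s. wo s i) has_real_derivative
          (- Ei S i * wo t i - flow_out (edges S) (fo t) i + p t i) / Mi S i) (at t)"
        if "tbar < t" "t \<notin> X" for t
        using that tbar_nonneg \<open>i \<in> nodes S\<close> by (intro wo_der) auto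
      show "Mi S i \<noteq> 0" using M_pos[OF \<open>i \<in> nodes S\<close>] by simp
    qed
    moreover have "((\<lambda>t. flow_out (edges S) (fo t) i) \<longlongrightarrow> flow_out (edges S) finf i) at_top"
      by (rule tendsto_flow_out[OF finite_edges fo_lim])
    ultimately show ?thesis using tendsto_unique[OF trivial_limit_at_top_linorder] by blast
  qed
  show "(\<Sum>e\<in>edges S. c e * finf e / yb S e) = (\<Sum>e\<in>edges S. c e * fo 0 e / yb S e)"
    if circulation: "\<And>i. i \<in> nodes S \<Longrightarrow> flow_out (edges S) c i = 0" for c
  proof -
    have "\<forall>\<^sub>F t in at_top. (\<Sum>e\<in>edges S. c e * fo t e / yb S e) = (\<Sum>e\<in>edges S. c e * fo 0 e / yb S e)"
      using eventually_ge_at_top[of 0] by eventually_elim (rule circulation_weighted_sum_const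
          [OF finite_nodes finite_edges edges_subset yb_pos circulation X fo_cont fo_der])
    hence "((\<lambda>t. \<Sum>e\<in>edges S. c e * fo t e / yb S e) \<longlongrightarrow> (\<Sum>e\<in>edges S. c e * fo 0 e / yb S e)) at_top"
      by (rule tendsto_eventually)
    moreover have "((\<lambda>t. \<Sum>e\<in>edges S. c e * fo t e / yb S e) \<longlongrightarrow> (\<Sum>e\<in>edges S. c e * finf e / yb S e)) at_top"
      using yb_pos by (intro tendsto_sum tendsto_intros fo_lim) (metis less_irrefl)+
    ultimately show ?thesis using tendsto_unique[OF trivial_limit_at_top_linorder] by blast
  qed
qed

end

(* u stands for the filtered MPC input: stability uses only the filter bound u_bound, never the
   MPC problem itself.  The equilibrium flow f_inf enters only through the two properties it
   inherits as the limit of the open-loop flow (open_loop_limit). *)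
locale closed_loop = power_network S p pstar tbar
  for S :: "'v sys" and p pstar tbar +
  fixes f :: "real \<Rightarrow> 'v \<times> 'v \<Rightarrow> real" and w aM u :: "real \<Rightarrow> 'v \<Rightarrow> real"
    and X :: "real set" and finf :: "'v \<times> 'v \<Rightarrow> real"
  assumes Iw_subset: "Iw S \<subseteq> Iu S" and Iu_subset: "Iu S \<subseteq> nodes S"
    and Tc_pos: "\<And>i. i \<in> Iu S \<Longrightarrow> 0 < Tc S i"
    and eps_Tc: "\<And>i. i \<in> Iu S \<Longrightarrow> eps S i * Tc S i < 1"
    and band_params: "\<And>i. i \<in> Iw S \<Longrightarrow> wlo S i < thlo S i \<and> thlo S i < 0 \<and> 0 < thhi S i
                        \<and> thhi S i < whi S i \<and> 0 < glo S i \<and> 0 < ghi S i"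
    and f_cont: "\<And>e. e \<in> edges S \<Longrightarrow> continuous_on {0..} (\<lambda>t. f t e)"
    and w_cont: "\<And>i. i \<in> nodes S \<Longrightarrow> continuous_on {0..} (\<lambda>t. w t i)"
    and aM_cont: "\<And>i. i \<in> nodes S \<Longrightarrow> continuous_on {0..} (\<lambda>t. aM t i)"
    and aM_off: "\<And>t i. i \<notin> Iu S \<Longrightarrow> 0 \<le> t \<Longrightarrow> aM t i = 0"
    and countable_X: "countable X"
    and f_deriv: "\<And>t e. 0 < t \<Longrightarrow> t \<notin> X \<Longrightarrow> e \<in> edges S \<Longrightarrow>
          ((\<lambda>s. f s e) has_real_derivative yb S e * (w t (fst e) - w t (snd e))) (at t)"
    and w_deriv: "\<And>t i. 0 < t \<Longrightarrow> t \<notin> X \<Longrightarrow> i \<in> nodes S \<Longrightarrow> ((\<lambda>s. w s i) has_real_derivative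
          (- Ei S i * w t i - flow_out (edges S) (f t) i + p t i
           + (alpha_df S p f w aM t i + aM t i)) / Mi S i) (at t)"
    and aM_deriv: "\<And>t i. 0 < t \<Longrightarrow> t \<notin> X \<Longrightarrow> i \<in> Iu S \<Longrightarrow>
          ((\<lambda>s. aM s i) has_real_derivative - aM t i / Tc S i - w t i + u t i) (at t)"
    and u_bound: "\<And>t i. i \<in> Iu S \<Longrightarrow> \<bar>u t i\<bar> \<le> eps S i * \<bar>aM t i\<bar>"
    and finf_balanced: "\<And>i. i \<in> nodes S \<Longrightarrow> flow_out (edges S) finf i = pstar i"
    and finf_circulation: "\<And>c. (\<And>i. i \<in> nodes S \<Longrightarrow> flow_out (edges S) c i = 0) \<Longrightarrow>
          (\<Sum>e\<in>edges S. c e * finf e / yb S e) = (\<Sum>e\<in>edges S. c e * f 0 e / yb S e)"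
begin

definition w_rate :: "real \<Rightarrow> 'v \<Rightarrow> real" where
  "w_rate t i = (- Ei S i * w t i - flow_out (edges S) (f t) i + p t i
                  + (alpha_df S p f w aM t i + aM t i)) / Mi S i"

definition aM_rate :: "real \<Rightarrow> 'v \<Rightarrow> real" where
  "aM_rate t i = - aM t i / Tc S i - w t i + u t i"

definition lyapunov :: "real \<Rightarrow> real" where
  "lyapunov t = (\<Sum>i\<in>nodes S. Mi S i * (w t i)\<^sup>2) + (\<Sum>e\<in>edges S. (f t e - finf e)\<^sup>2 / yb S e)
                 + (\<Sum>i\<in>Iu S. (aM t i)\<^sup>2)"

definition lyapunov_rate :: "real \<Rightarrow> real" where
  "lyapunov_rate t = 2 * ((\<Sum>i\<in>nodes S. w t i * alpha_df S p f w aM t i - Ei S i * (w t i)\<^sup>2)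
                        + (\<Sum>i\<in>Iu S. aM t i * u t i - (aM t i)\<^sup>2 / Tc S i))"

lemma finite_Iu: "finite (Iu S)"
  using finite_subset[OF Iu_subset finite_nodes] .

lemma has_real_derivative_w:
  "0 < t \<Longrightarrow> t \<notin> X \<Longrightarrow> i \<in> nodes S \<Longrightarrow> ((\<lambda>s. w s i) has_real_derivative w_rate t i) (at t)"
  unfolding w_rate_def by (rule w_deriv)

lemma has_real_derivative_aM:
  "0 < t \<Longrightarrow> t \<notin> X \<Longrightarrow> i \<in> Iu S \<Longrightarrow> ((\<lambda>s. aM s i) has_real_derivative aM_rate t i) (at t)"
  unfolding aM_rate_def by (rule aM_deriv)

lemma w_in_band:
  assumes "i \<in> Iw S" and "w 0 i \<in> {wlo S i .. whi S i}" and "0 \<le> t"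
  shows "w t i \<in> {wlo S i .. whi S i}"
proof -
  have i: "i \<in> nodes S" using assms(1) Iw_subset Iu_subset by blast
  have band: "wlo S i < thlo S i" "thlo S i < thhi S i" "thhi S i < whi S i" "0 < glo S i" "0 < ghi S i"
    using band_params[OF assms(1)] by auto
  have "w t i \<le> whi S i"
  proof (rule DERIV_nonpos_above_imp_le[where g' = "\<lambda>s. w_rate s i", OF w_cont[OF i] countable_X])
    show "((\<lambda>s. w s i) has_real_derivative w_rate s i) (at s)" if "0 < s" "s \<notin> X" for s
      using that i by (rule has_real_derivative_w)
    show "w_rate s i \<le> 0" if "0 < s" "s \<notin> X" "whi S i < w s i" for s
      using power_balance_nonpos_above_band[of i S w s f p aM, OF assms(1) band(3,5) that(3)] M_pos[OF i]
      unfolding w_rate_def by (simp add: divide_nonpos_pos)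
  qed (use assms in auto)
  moreover have "- w t i \<le> - wlo S i"
  proof (rule DERIV_nonpos_above_imp_le[where g = "\<lambda>s. - w s i" and g' = "\<lambda>s. - w_rate s i", OF _ countable_X])
    show "continuous_on {0..} (\<lambda>s. - w s i)" by (intro continuous_intros w_cont[OF i])
    show "((\<lambda>s. - w s i) has_real_derivative - w_rate s i) (at s)" if "0 < s" "s \<notin> X" for s
      using that i by (intro derivative_intros has_real_derivative_w)
    show "- w_rate s i \<le> 0" if "0 < s" "s \<notin> X" "- wlo S i < - w s i" for s
      using power_balance_nonneg_below_band[of i S w s f p aM, OF assms(1) band(1,2,4)] that(3) M_pos[OF i]
      unfolding w_rate_def by simp
  qed (use assms in auto)
  ultimately show ?thesis by simp
qed

lemma flow_deviation_power:
  "(\<Sum>e\<in>edges S. (f t e - finf e) * (w t (fst e) - w t (snd e)))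
     = (\<Sum>i\<in>nodes S. w t i * (flow_out (edges S) (f t) i - pstar i))"
proof -
  have "(\<Sum>e\<in>edges S. (f t e - finf e) * (w t (fst e) - w t (snd e)))
      = (\<Sum>i\<in>nodes S. w t i * flow_out (edges S) (\<lambda>e. f t e - finf e) i)"
    by (rule sum_potential_difference_eq_flow_out[OF finite_nodes finite_edges edges_subset])
  also have "\<dots> = (\<Sum>i\<in>nodes S. w t i * (flow_out (edges S) (f t) i - pstar i))"
    by (intro sum.cong) (simp_all add: flow_out_diff finf_balanced)
  finally show ?thesis .
qed

lemma node_power_eq:
  assumes "tbar \<le> t" and "i \<in> nodes S"
  shows "Mi S i * (2 * w t i * w_rate t i)
           = 2 * (w t i * alpha_df S p f w aM t i - Ei S i * (w t i)\<^sup>2) + 2 * (w t i * aM t i)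
             - 2 * (w t i * (flow_out (edges S) (f t) i - pstar i))"
proof -
  have "Mi S i \<noteq> 0" using M_pos[OF assms(2)] by simp
  thus ?thesis using p_eventually_const[OF assms] by (simp add: w_rate_def field_simps power2_eq_square)
qed

lemma filter_power_eq:
  assumes "i \<in> Iu S"
  shows "2 * aM t i * aM_rate t i = 2 * (aM t i * u t i - (aM t i)\<^sup>2 / Tc S i) - 2 * (w t i * aM t i)"
proof -
  have "Tc S i \<noteq> 0" using Tc_pos[OF assms] by simp
  thus ?thesis by (simp add: aM_rate_def field_simps power2_eq_square)
qed

lemma lyapunov_rate_eq:
  assumes "tbar \<le> t"
  shows "(\<Sum>i\<in>nodes S. Mi S i * (2 * w t i * w_rate t i))
         + (\<Sum>e\<in>edges S. 2 * (f t e - finf e) * (yb S e * (w t (fst e) - w t (snd e))) / yb S e)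
         + (\<Sum>i\<in>Iu S. 2 * aM t i * aM_rate t i) = lyapunov_rate t"
proof -
  \<comment> \<open>The flow terms cancel against D^T f_inf = p*, and the w aM cross terms of the
      frequency and filter equations cancel each other.\<close>
  have "(\<Sum>i\<in>nodes S. w t i * aM t i) = (\<Sum>i\<in>Iu S. w t i * aM t i)"
    using aM_off assms tbar_nonneg by (intro sum.mono_neutral_right[OF finite_nodes Iu_subset]) auto
  hence "(\<Sum>i\<in>nodes S. Mi S i * (2 * w t i * w_rate t i))
      = 2 * (\<Sum>i\<in>nodes S. w t i * alpha_df S p f w aM t i - Ei S i * (w t i)\<^sup>2)
        + 2 * (\<Sum>i\<in>Iu S. w t i * aM t i)
        - 2 * (\<Sum>i\<in>nodes S. w t i * (flow_out (edges S) (f t) i - pstar i))"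
    using node_power_eq[OF assms]
    by (simp add: sum.distrib sum_subtractf sum_distrib_left[symmetric] cong: sum.cong)
  moreover have "(\<Sum>e\<in>edges S. 2 * (f t e - finf e) * (yb S e * (w t (fst e) - w t (snd e))) / yb S e)
      = 2 * (\<Sum>i\<in>nodes S. w t i * (flow_out (edges S) (f t) i - pstar i))"
    using yb_pos unfolding flow_deviation_power[symmetric]
    by (simp add: sum_distrib_left) (intro sum.cong; force)
  moreover have "(\<Sum>i\<in>Iu S. 2 * aM t i * aM_rate t i)
      = (\<Sum>i\<in>Iu S. 2 * (aM t i * u t i - (aM t i)\<^sup>2 / Tc S i) - 2 * (w t i * aM t i))"
    by (rule sum.cong[OF refl filter_power_eq])
  hence "(\<Sum>i\<in>Iu S. 2 * aM t i * aM_rate t i)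
      = 2 * (\<Sum>i\<in>Iu S. aM t i * u t i - (aM t i)\<^sup>2 / Tc S i) - 2 * (\<Sum>i\<in>Iu S. w t i * aM t i)"
    by (simp only: sum_subtractf sum_distrib_left[symmetric])
  ultimately show ?thesis unfolding lyapunov_rate_def by simp
qed

lemma has_real_derivative_lyapunov:
  assumes "tbar < t" and "t \<notin> X"
  shows "(lyapunov has_real_derivative lyapunov_rate t) (at t)"
proof -
  have "0 < t" using assms(1) tbar_nonneg by linarith
  have "(lyapunov has_real_derivative
      (\<Sum>i\<in>nodes S. Mi S i * (2 * w t i * w_rate t i))
      + (\<Sum>e\<in>edges S. 2 * (f t e - finf e) * (yb S e * (w t (fst e) - w t (snd e))) / yb S e)
      + (\<Sum>i\<in>Iu S. 2 * aM t i * aM_rate t i)) (at t)"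
    unfolding lyapunov_def using \<open>0 < t\<close> assms(2) Iu_subset
    by (intro DERIV_add DERIV_sum)
      (auto intro!: derivative_eq_intros has_real_derivative_w has_real_derivative_aM f_deriv)
  thus ?thesis using lyapunov_rate_eq assms(1) by simp
qed

lemma control_gain_pos: "i \<in> Iu S \<Longrightarrow> 0 < 1 / Tc S i - eps S i"
  using eps_Tc[of i] Tc_pos[of i] by (simp add: field_simps)

lemma control_term_le:
  assumes "i \<in> Iu S"
  shows "aM t i * u t i - (aM t i)\<^sup>2 / Tc S i \<le> - (1 / Tc S i - eps S i) * (aM t i)\<^sup>2"
proof -
  have "aM t i * u t i \<le> \<bar>aM t i\<bar> * \<bar>u t i\<bar>" by (simp add: abs_mult[symmetric])
  also have "\<dots> \<le> \<bar>aM t i\<bar> * (eps S i * \<bar>aM t i\<bar>)" by (intro mult_left_mono u_bound assms) simp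
  also have "\<dots> = eps S i * (aM t i)\<^sup>2" by (simp add: power2_eq_square abs_mult_self_eq algebra_simps)
  finally show ?thesis by (simp add: algebra_simps)
qed

lemma node_term_le: "w t i * alpha_df S p f w aM t i - Ei S i * (w t i)\<^sup>2 \<le> - Ei S i * (w t i)\<^sup>2"
proof -
  have "w t i * alpha_df S p f w aM t i \<le> 0" using band_params by (intro w_mult_alpha_df_nonpos) auto
  thus ?thesis by simp
qed

lemma node_term_nonpos:
  assumes "i \<in> nodes S"
  shows "w t i * alpha_df S p f w aM t i - Ei S i * (w t i)\<^sup>2 \<le> 0"
proof -
  have "0 \<le> Ei S i * (w t i)\<^sup>2" using E_pos[OF assms] by simp
  with node_term_le[of t i] show ?thesis by linarith
qed

lemma control_term_nonpos:
  assumes "i \<in> Iu S"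
  shows "aM t i * u t i - (aM t i)\<^sup>2 / Tc S i \<le> 0"
proof -
  have "0 \<le> (1 / Tc S i - eps S i) * (aM t i)\<^sup>2" using control_gain_pos[OF assms] by simp
  with control_term_le[OF assms, of t] show ?thesis by linarith
qed

lemma lyapunov_rate_le_w:
  assumes "j \<in> nodes S"
  shows "lyapunov_rate t \<le> - (2 * Ei S j) * (w t j)\<^sup>2"
proof -
  have "(\<Sum>i\<in>nodes S. w t i * alpha_df S p f w aM t i - Ei S i * (w t i)\<^sup>2)
      \<le> w t j * alpha_df S p f w aM t j - Ei S j * (w t j)\<^sup>2"
    by (intro sum_nonpos_le_member finite_nodes assms node_term_nonpos)
  also have "\<dots> \<le> - Ei S j * (w t j)\<^sup>2" by (rule node_term_le)
  finally have "lyapunov_rate t \<le> 2 * (- Ei S j * (w t j)\<^sup>2 + 0)"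
    unfolding lyapunov_rate_def by (intro mult_left_mono add_mono sum_nonpos control_term_nonpos) auto
  thus ?thesis by simp
qed

lemma lyapunov_rate_le_aM:
  assumes "j \<in> Iu S"
  shows "lyapunov_rate t \<le> - (2 * (1 / Tc S j - eps S j)) * (aM t j)\<^sup>2"
proof -
  have "(\<Sum>i\<in>Iu S. aM t i * u t i - (aM t i)\<^sup>2 / Tc S i) \<le> aM t j * u t j - (aM t j)\<^sup>2 / Tc S j"
    by (intro sum_nonpos_le_member finite_Iu assms control_term_nonpos)
  also have "\<dots> \<le> - (1 / Tc S j - eps S j) * (aM t j)\<^sup>2" by (rule control_term_le[OF assms])
  finally have "lyapunov_rate t \<le> 2 * (0 + - (1 / Tc S j - eps S j) * (aM t j)\<^sup>2)"
    unfolding lyapunov_rate_def by (intro mult_left_mono add_mono sum_nonpos node_term_nonpos) auto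
  thus ?thesis by (simp add: algebra_simps)
qed

lemma lyapunov_rate_nonpos: "lyapunov_rate t \<le> 0"
proof -
  have "lyapunov_rate t \<le> 2 * (0 + 0)"
    unfolding lyapunov_rate_def
    by (intro mult_left_mono add_mono sum_nonpos node_term_nonpos control_term_nonpos) auto
  thus ?thesis by simp
qed

lemma continuous_on_lyapunov: "continuous_on {0..} lyapunov"
  unfolding lyapunov_def using Iu_subset yb_pos
  by (intro continuous_intros f_cont w_cont aM_cont) (auto simp: less_imp_neq[symmetric])

lemma lyapunov_antimono: "tbar \<le> s \<Longrightarrow> s \<le> t \<Longrightarrow> lyapunov t \<le> lyapunov s"
  using tbar_nonneg
  by (intro DERIV_nonpos_imp_decreasing_countable[OF _ continuous_on_subset[OF continuous_on_lyapunov]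
        countable_X has_real_derivative_lyapunov lyapunov_rate_nonpos]) auto

lemma lyapunov_terms_le:
  shows "i \<in> nodes S \<Longrightarrow> Mi S i * (w t i)\<^sup>2 \<le> lyapunov t"
    and "e \<in> edges S \<Longrightarrow> (f t e - finf e)\<^sup>2 / yb S e \<le> lyapunov t"
    and "i \<in> Iu S \<Longrightarrow> (aM t i)\<^sup>2 \<le> lyapunov t"
proof -
  have M: "0 \<le> Mi S i * (w t i)\<^sup>2" if "i \<in> nodes S" for i using M_pos[OF that] by simp
  have Y: "0 \<le> (f t e - finf e)\<^sup>2 / yb S e" if "e \<in> edges S" for e using yb_pos[OF that] by simp
  have sums: "0 \<le> (\<Sum>i\<in>nodes S. Mi S i * (w t i)\<^sup>2)" "0 \<le> (\<Sum>e\<in>edges S. (f t e - finf e)\<^sup>2 / yb S e)"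
    "0 \<le> (\<Sum>i\<in>Iu S. (aM t i)\<^sup>2)" using M Y by (auto intro: sum_nonneg)
  show "Mi S i * (w t i)\<^sup>2 \<le> lyapunov t" if "i \<in> nodes S"
  proof -
    have "Mi S i * (w t i)\<^sup>2 \<le> (\<Sum>i\<in>nodes S. Mi S i * (w t i)\<^sup>2)"
      by (rule member_le_sum) (use that M finite_nodes in auto)
    with sums show ?thesis unfolding lyapunov_def by linarith
  qed
  show "(f t e - finf e)\<^sup>2 / yb S e \<le> lyapunov t" if "e \<in> edges S"
  proof -
    have "(f t e - finf e)\<^sup>2 / yb S e \<le> (\<Sum>e\<in>edges S. (f t e - finf e)\<^sup>2 / yb S e)"
      by (rule member_le_sum) (use that Y finite_edges in auto)
    with sums show ?thesis unfolding lyapunov_def by linarith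
  qed
  show "(aM t i)\<^sup>2 \<le> lyapunov t" if "i \<in> Iu S"
  proof -
    have "(aM t i)\<^sup>2 \<le> (\<Sum>i\<in>Iu S. (aM t i)\<^sup>2)"
      by (rule member_le_sum) (use that finite_Iu in auto)
    with sums show ?thesis unfolding lyapunov_def by linarith
  qed
qed

lemma lyapunov_nonneg: "0 \<le> lyapunov t"
  unfolding lyapunov_def using M_pos yb_pos
  by (intro add_nonneg_nonneg sum_nonneg) (simp_all add: less_imp_le)

lemma lyapunov_le_initial: "tbar \<le> t \<Longrightarrow> lyapunov t \<le> lyapunov tbar"
  by (rule lyapunov_antimono) auto

lemma bounded_w:
  assumes "i \<in> nodes S"
  shows "bounded ((\<lambda>t. w t i) ` {tbar..})"
proof (rule bounded_of_square_le[where c = "Mi S i" and K = "lyapunov tbar"])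
  show "0 < Mi S i" by (rule M_pos[OF assms])
  show "Mi S i * (w t i)\<^sup>2 \<le> lyapunov tbar" if "t \<in> {tbar..}" for t
    using lyapunov_terms_le(1)[OF assms, of t] lyapunov_le_initial[of t] that by simp
qed

lemma bounded_flow_deviation:
  assumes "e \<in> edges S"
  shows "bounded ((\<lambda>t. f t e - finf e) ` {tbar..})"
proof (rule bounded_of_square_le[where c = "inverse (yb S e)" and K = "lyapunov tbar"])
  show "0 < inverse (yb S e)" using yb_pos[OF assms] by simp
  fix t assume "t \<in> {tbar..}"
  have "inverse (yb S e) * (f t e - finf e)\<^sup>2 = (f t e - finf e)\<^sup>2 / yb S e"
    by (simp add: divide_inverse mult.commute)
  also have "\<dots> \<le> lyapunov t" by (rule lyapunov_terms_le(2)[OF assms])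
  also have "\<dots> \<le> lyapunov tbar" using \<open>t \<in> {tbar..}\<close> by (intro lyapunov_le_initial) simp
  finally show "inverse (yb S e) * (f t e - finf e)\<^sup>2 \<le> lyapunov tbar" .
qed

lemma bounded_f: "e \<in> edges S \<Longrightarrow> bounded ((\<lambda>t. f t e) ` {tbar..})"
  using bounded_plus_comp[OF bounded_flow_deviation bounded_const_comp, of e "finf e"] by simp

lemma bounded_aM: "bounded ((\<lambda>t. aM t i) ` {tbar..})"
proof (cases "i \<in> Iu S")
  case True
  show ?thesis
  proof (rule bounded_of_square_le[where c = 1 and K = "lyapunov tbar"])
    show "1 * (aM t i)\<^sup>2 \<le> lyapunov tbar" if "t \<in> {tbar..}" for t
      using lyapunov_terms_le(3)[OF True, of t] lyapunov_le_initial[of t] that by simp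
  qed simp
next
  case False
  hence "(\<lambda>t. aM t i) ` {tbar..} \<subseteq> {0}" using aM_off tbar_nonneg by auto
  thus ?thesis by (rule bounded_subset[rotated]) simp
qed

lemma bounded_p: "i \<in> nodes S \<Longrightarrow> bounded ((\<lambda>t. p t i) ` {tbar..})"
  by (rule bounded_subset[of "{pstar i}"]) (auto simp: p_eventually_const)

lemma bounded_w_rate:
  assumes "i \<in> nodes S"
  shows "bounded ((\<lambda>t. w_rate t i) ` {tbar..})"
proof -
  define v where "v t = Ei S i * w t i + flow_out (edges S) (f t) i - p t i - aM t i" for t
  have v: "bounded (v ` {tbar..})"
    unfolding v_def using assms finite_edges
    by (intro bounded_minus_comp bounded_plus_comp bounded_cmult_comp bounded_w bounded_aM bounded_p
        bounded_flow_out_comp bounded_f)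
  have "bounded ((\<lambda>t. alpha_df S p f w aM t i) ` {tbar..})"
  proof (rule bounded_abs_le_comp)
    show "bounded ((\<lambda>t. \<bar>v t\<bar> + (\<bar>ghi S i\<bar> + \<bar>glo S i\<bar>)) ` {tbar..})"
      by (intro bounded_plus_comp bounded_abs_comp v bounded_const_comp)
    show "\<bar>alpha_df S p f w aM t i\<bar> \<le> \<bar>v t\<bar> + (\<bar>ghi S i\<bar> + \<bar>glo S i\<bar>)" for t
    proof (cases "i \<in> Iw S")
      case True
      thus ?thesis using abs_alpha_df_le[of S i p f w aM t] band_params[OF True] unfolding v_def by auto
    qed (simp add: alpha_df_def)
  qed
  hence "bounded ((\<lambda>t. inverse (Mi S i) * (alpha_df S p f w aM t i - v t)) ` {tbar..})"
    by (intro bounded_cmult_comp bounded_minus_comp v)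
  moreover have "w_rate t i = inverse (Mi S i) * (alpha_df S p f w aM t i - v t)" for t
    using M_pos[OF assms] by (simp add: w_rate_def v_def field_simps)
  ultimately show ?thesis by simp
qed

lemma bounded_aM_rate:
  assumes "i \<in> Iu S"
  shows "bounded ((\<lambda>t. aM_rate t i) ` {tbar..})"
proof -
  have i: "i \<in> nodes S" using assms Iu_subset by blast
  have "bounded ((\<lambda>t. u t i) ` {tbar..})"
    using u_bound[OF assms] by (intro bounded_abs_le_comp[OF bounded_cmult_comp[OF bounded_abs_comp[OF bounded_aM]]])
  hence "bounded ((\<lambda>t. - inverse (Tc S i) * aM t i - w t i + u t i) ` {tbar..})"
    by (intro bounded_plus_comp bounded_minus_comp bounded_cmult_comp bounded_aM bounded_w i)
  thus ?thesis by (simp add: aM_rate_def divide_inverse mult.commute)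
qed

lemma w_tendsto_0:
  assumes "i \<in> nodes S"
  shows "((\<lambda>t. w t i) \<longlongrightarrow> 0) at_top"
proof (rule dissipation_tendsto_zero[where V' = lyapunov_rate and g' = "\<lambda>t. w_rate t i",
      OF countable_X _ _ has_real_derivative_lyapunov _ lyapunov_rate_le_w[OF assms] _ lyapunov_nonneg
      bounded_w_rate[OF assms]])
  show "continuous_on {tbar..} lyapunov" "continuous_on {tbar..} (\<lambda>t. w t i)"
    using tbar_nonneg by (auto intro: continuous_on_subset[OF continuous_on_lyapunov]
        continuous_on_subset[OF w_cont[OF assms]])
  show "((\<lambda>t. w t i) has_real_derivative w_rate t i) (at t)" if "tbar < t" "t \<notin> X" for t
    using that tbar_nonneg assms by (intro has_real_derivative_w) auto
  show "0 < 2 * Ei S i" using E_pos[OF assms] by simp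
qed

lemma aM_tendsto_0: "((\<lambda>t. aM t i) \<longlongrightarrow> 0) at_top"
proof (cases "i \<in> Iu S")
  case True
  hence i: "i \<in> nodes S" using Iu_subset by blast
  show ?thesis
  proof (rule dissipation_tendsto_zero[where V' = lyapunov_rate and g' = "\<lambda>t. aM_rate t i",
        OF countable_X _ _ has_real_derivative_lyapunov _ lyapunov_rate_le_aM[OF True] _ lyapunov_nonneg
        bounded_aM_rate[OF True]])
    show "continuous_on {tbar..} lyapunov" "continuous_on {tbar..} (\<lambda>t. aM t i)"
      using tbar_nonneg by (auto intro: continuous_on_subset[OF continuous_on_lyapunov]
          continuous_on_subset[OF aM_cont[OF i]])
    show "((\<lambda>t. aM t i) has_real_derivative aM_rate t i) (at t)" if "tbar < t" "t \<notin> X" for t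
      using that tbar_nonneg True by (intro has_real_derivative_aM) auto
    show "0 < 2 * (1 / Tc S i - eps S i)" using control_gain_pos[OF True] by simp
  qed
next
  case False
  have "\<forall>\<^sub>F t in at_top. aM t i = 0"
    using eventually_ge_at_top[of 0] by eventually_elim (rule aM_off[OF False])
  thus ?thesis by (rule tendsto_eventually)
qed

lemma alpha_df_eventually_0: "\<forall>\<^sub>F t in at_top. alpha_df S p f w aM t i = 0"
proof (cases "i \<in> Iw S")
  case True
  hence "i \<in> nodes S" using Iw_subset Iu_subset by blast
  moreover have "0 < min (- thlo S i) (thhi S i)" using band_params[OF True] by simp
  ultimately have "\<forall>\<^sub>F t in at_top. dist (w t i) 0 < min (- thlo S i) (thhi S i)"
    by (intro tendstoD[OF w_tendsto_0])
  thus ?thesis by eventually_elim (intro alpha_df_eq_0; simp add: dist_real_def abs_less_iff)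
qed (simp add: alpha_df_def)

lemma alpha_df_tendsto_0: "((\<lambda>t. alpha_df S p f w aM t i) \<longlongrightarrow> 0) at_top"
  by (rule tendsto_eventually[OF alpha_df_eventually_0])

lemma flow_out_tendsto_injection:
  assumes "i \<in> nodes S"
  shows "((\<lambda>t. flow_out (edges S) (f t) i) \<longlongrightarrow> pstar i) at_top"
proof (rule flow_out_tendsto_of_frequency_tendsto[OF finite_edges edges_subset assms countable_X _ _ _ _
      w_tendsto_0])
  show "continuous_on {tbar..} (\<lambda>t. f t e)" if "e \<in> edges S" for e
    using tbar_nonneg by (intro continuous_on_subset[OF f_cont[OF that]]) auto
  show "continuous_on {tbar..} (\<lambda>t. w t i)"
    using tbar_nonneg by (intro continuous_on_subset[OF w_cont[OF assms]]) auto
  show "((\<lambda>s. f s e) has_real_derivative yb S e * (w t (fst e) - w t (snd e))) (at t)"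
    if "tbar < t" "t \<notin> X" "e \<in> edges S" for t e
    using that tbar_nonneg by (intro f_deriv) auto
  show "((\<lambda>s. w s i) has_real_derivative (- Ei S i * w t i - flow_out (edges S) (f t) i
      + (p t i + (alpha_df S p f w aM t i + aM t i))) / Mi S i) (at t)" if "tbar < t" "t \<notin> X" for t
  proof -
    have "0 < t" using that tbar_nonneg by linarith
    thus ?thesis using w_deriv[OF _ \<open>t \<notin> X\<close> assms] by (simp only: add.assoc)
  qed
  have "((\<lambda>t. p t i + (alpha_df S p f w aM t i + aM t i)) \<longlongrightarrow> pstar i + (0 + 0)) at_top"
    by (intro tendsto_add p_tendsto alpha_df_tendsto_0 aM_tendsto_0 assms)
  thus "((\<lambda>t. p t i + (alpha_df S p f w aM t i + aM t i)) \<longlongrightarrow> pstar i) at_top" by simp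
  show "Mi S i \<noteq> 0" using M_pos[OF assms] by simp
qed

lemma flow_deviation_orthogonal:
  assumes circulation: "\<And>i. i \<in> nodes S \<Longrightarrow> flow_out (edges S) c i = 0" and "0 \<le> t"
  shows "(\<Sum>e\<in>edges S. c e * (f t e - finf e) / yb S e) = 0"
proof -
  have "(\<Sum>e\<in>edges S. c e * f t e / yb S e) = (\<Sum>e\<in>edges S. c e * f 0 e / yb S e)"
    using circulation_weighted_sum_const[OF finite_nodes finite_edges edges_subset yb_pos circulation
        countable_X f_cont f_deriv \<open>0 \<le> t\<close>] .
  also have "\<dots> = (\<Sum>e\<in>edges S. c e * finf e / yb S e)" by (rule finf_circulation[OF circulation, symmetric])
  finally show ?thesis by (simp add: right_diff_distrib diff_divide_distrib sum_subtractf)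
qed

lemma f_tendsto:
  assumes "e \<in> edges S"
  shows "((\<lambda>t. f t e) \<longlongrightarrow> finf e) at_top"
proof (rule LIM_zero_cancel)
  show "((\<lambda>t. f t e - finf e) \<longlongrightarrow> 0) at_top"
  proof (rule flow_tendsto_zero_of_flow_out_tendsto_zero[OF finite_edges yb_pos bounded_flow_deviation
        _ flow_deviation_orthogonal assms])
    show "((\<lambda>t. flow_out (edges S) (\<lambda>e. f t e - finf e) i) \<longlongrightarrow> 0) at_top" if "i \<in> nodes S" for i
      using tendsto_diff[OF flow_out_tendsto_injection[OF that] tendsto_const[of "pstar i"]]
      by (simp add: flow_out_diff finf_balanced[OF that])
  qed (use tbar_nonneg in auto)
qed

lemma w_eventually_in_band:
  assumes "i \<in> Iw S"
  shows "\<exists>t0. \<forall>t\<ge>t0. w t i \<in> {wlo S i .. whi S i}"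
proof -
  have "i \<in> nodes S" using assms Iw_subset Iu_subset by blast
  moreover have "0 < min (- wlo S i) (whi S i)" using band_params[OF assms] by auto
  ultimately have "\<forall>\<^sub>F t in at_top. dist (w t i) 0 < min (- wlo S i) (whi S i)"
    by (intro tendstoD[OF w_tendsto_0])
  hence "\<forall>\<^sub>F t in at_top. w t i \<in> {wlo S i .. whi S i}"
    by eventually_elim (auto simp: dist_real_def abs_less_iff)
  thus ?thesis unfolding eventually_at_top_linorder by blast
qed

end

lemma (in power_network) closed_loop_of_solution:
  assumes sol: "closed_loop_solution S r Reg \<Delta> fc p f w aM"
    and sets: "Iw S \<subseteq> Iu S" "Iu S \<subseteq> nodes S"
    and control_params: "\<And>i. i \<in> Iu S \<Longrightarrow> 0 < eps S i \<and> 0 < Tc S i \<and> eps S i * Tc S i < 1"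
    and band_params: "\<And>i. i \<in> Iw S \<Longrightarrow> wlo S i < thlo S i \<and> thlo S i < 0 \<and> 0 < thhi S i
                        \<and> thhi S i < whi S i \<and> 0 < glo S i \<and> 0 < ghi S i"
    and ol: "open_loop_solution S p fo wo" and "fo 0 = f 0"
    and fo_lim: "\<And>e. e \<in> edges S \<Longrightarrow> ((\<lambda>t. fo t e) \<longlongrightarrow> finf e) at_top"
    and wo_lim: "\<And>i. i \<in> nodes S \<Longrightarrow> ((\<lambda>t. wo t i) \<longlongrightarrow> 0) at_top"
  obtains X where "closed_loop S p pstar tbar f w aM
      (\<lambda>t i. clamp_u S i (aM t i) (u_mpc S r Reg \<Delta> fc f w aM t i)) X finf"
proof -
  from sol obtain X where "countable X" and derivatives: "\<forall>t>0. t \<notin> X \<longrightarrow>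
      (\<forall>e\<in>edges S. ((\<lambda>s. f s e) has_real_derivative yb S e * (w t (fst e) - w t (snd e))) (at t))
    \<and> (\<forall>i\<in>nodes S. ((\<lambda>s. w s i) has_real_derivative
           (- Ei S i * w t i - flow_out (edges S) (f t) i + p t i
            + (alpha_df S p f w aM t i + aM t i)) / Mi S i) (at t))
    \<and> (\<forall>i\<in>Iu S. ((\<lambda>s. aM s i) has_real_derivative
           - aM t i / Tc S i - w t i + clamp_u S i (aM t i) (u_mpc S r Reg \<Delta> fc f w aM t i)) (at t))"
    unfolding closed_loop_solution_def by (elim conjE exE)
  have "\<bar>clamp_u S i (aM t i) (u_mpc S r Reg \<Delta> fc f w aM t i)\<bar> \<le> eps S i * \<bar>aM t i\<bar>"
    if "i \<in> Iu S" for t i using control_params[OF that] by (intro abs_clamp_u_le) simp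
  moreover have "(\<Sum>e\<in>edges S. c e * finf e / yb S e) = (\<Sum>e\<in>edges S. c e * f 0 e / yb S e)"
    if "\<And>i. i \<in> nodes S \<Longrightarrow> flow_out (edges S) c i = 0" for c
    using open_loop_limit_circulation[OF ol fo_lim wo_lim that] \<open>fo 0 = f 0\<close> by simp
  ultimately show thesis
    using sol derivatives \<open>countable X\<close> sets control_params band_params
      open_loop_limit_balanced[OF ol fo_lim wo_lim]
    unfolding closed_loop_solution_def
    by (intro that closed_loop.intro power_network_axioms closed_loop_axioms.intro) auto
qed

theorem proposition5p1:
  fixes S :: "'v sys"
    and r :: nat and Reg :: "nat \<Rightarrow> 'v set"
    and \<Delta> :: "nat \<Rightarrow> nat \<Rightarrow> real"
    and fc :: "nat \<Rightarrow> nat \<Rightarrow> real \<Rightarrow> 'v \<Rightarrow> real"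
    and p :: "real \<Rightarrow> 'v \<Rightarrow> real" and pstar :: "'v \<Rightarrow> real" and tbar :: real
    and f :: "real \<Rightarrow> 'v \<times> 'v \<Rightarrow> real" and w aM :: "real \<Rightarrow> 'v \<Rightarrow> real"
    and finf :: "'v \<times> 'v \<Rightarrow> real"
  assumes graph: "connected_oriented_graph (nodes S) (edges S)"
    and M_pos: "\<forall>i\<in>nodes S. Mi S i > 0" and E_pos: "\<forall>i\<in>nodes S. Ei S i > 0"
    and yb_pos: "\<forall>e\<in>edges S. yb S e > 0"
    and sets: "Iw S \<subseteq> Iu S" "Iu S \<subseteq> nodes S"
    and T_pos: "Ts S > 0" and th_pos: "th S > 0" and d_pos: "dd S > 0"
    and u_params: "\<forall>i\<in>Iu S. cc S i > 0 \<and> eps S i > 0 \<and> Tc S i > 0"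
    and w_params: "\<forall>i\<in>Iw S. wlo S i < thlo S i \<and> thlo S i < 0 \<and> 0 < thhi S i
                      \<and> thhi S i < whi S i \<and> glo S i > 0 \<and> ghi S i > 0"
    and regions: "\<forall>b\<in>{1..r}. Reg b \<subseteq> nodes S"
    and cover: "Iu S \<subseteq> (\<Union>b\<in>{1..r}. Reg b)"
    and disj: "\<forall>b1\<in>{1..r}. \<forall>b2\<in>{1..r}. b1 \<noteq> b2 \<longrightarrow> Reg b1 \<inter> Reg b2 \<inter> Iu S = {}"
    and samp0: "\<forall>b\<in>{1..r}. \<Delta> b 0 = 0"
    and samp_mono: "\<forall>b\<in>{1..r}. strict_mono (\<Delta> b)"
    and samp_unb: "\<forall>b\<in>{1..r}. \<forall>t. \<exists>j. \<Delta> b j > t"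
    and fc_pwc: "\<forall>b\<in>{1..r}. \<forall>j. \<forall>i\<in>Reg b.
                    piecewise_cont {\<Delta> b j .. \<Delta> b j + th S} (\<lambda>\<tau>. fc b j \<tau> i)"
    and p_pwc: "\<forall>i\<in>nodes S. piecewise_cont {0..} (\<lambda>t. p t i)"
    and tbar: "0 \<le> tbar" "\<forall>i\<in>nodes S. \<forall>t\<ge>tbar. p t i = pstar i"
    and balance: "(\<Sum>i\<in>nodes S. pstar i) = 0"
    and epsT: "\<forall>i\<in>Iu S. eps S i * Tc S i < 1"
    and sol: "closed_loop_solution S r Reg \<Delta> fc p f w aM"
    and eq: "\<exists>fo wo. open_loop_solution S p fo wo \<and> fo 0 = f 0 \<and> wo 0 = w 0
               \<and> (\<forall>e\<in>edges S. ((\<lambda>t. fo t e) \<longlongrightarrow> finf e) at_top)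
               \<and> (\<forall>i\<in>nodes S. ((\<lambda>t. wo t i) \<longlongrightarrow> 0) at_top)"
  shows "(\<forall>i\<in>Iw S. w 0 i \<in> {wlo S i .. whi S i} \<longrightarrow> (\<forall>t\<ge>0. w t i \<in> {wlo S i .. whi S i}))
       \<and> (\<forall>i\<in>Iw S. w 0 i \<notin> {wlo S i .. whi S i} \<longrightarrow>
            (\<exists>t0. \<forall>t\<ge>t0. w t i \<in> {wlo S i .. whi S i}))
       \<and> (\<forall>e\<in>edges S. ((\<lambda>t. f t e) \<longlongrightarrow> finf e) at_top)
       \<and> (\<forall>i\<in>nodes S. ((\<lambda>t. w t i) \<longlongrightarrow> 0) at_top)
       \<and> (\<forall>i\<in>nodes S. ((\<lambda>t. alpha_df S p f w aM t i + aM t i) \<longlongrightarrow> 0) at_top)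
       \<and> (\<forall>i\<in>nodes S. ((\<lambda>t. aM t i) \<longlongrightarrow> 0) at_top)
       \<and> (\<forall>i\<in>nodes S. ((\<lambda>t. alpha_df S p f w aM t i) \<longlongrightarrow> 0) at_top)"
proof -
  interpret power_network S p pstar tbar
    using graph M_pos E_pos yb_pos tbar by unfold_locales (auto simp: connected_oriented_graph_def)
  from eq obtain fo wo where ol: "open_loop_solution S p fo wo" and "fo 0 = f 0"
    and fo_lim: "\<And>e. e \<in> edges S \<Longrightarrow> ((\<lambda>t. fo t e) \<longlongrightarrow> finf e) at_top"
    and wo_lim: "\<And>i. i \<in> nodes S \<Longrightarrow> ((\<lambda>t. wo t i) \<longlongrightarrow> 0) at_top"
    by blast
  obtain X where "closed_loop S p pstar tbar f w aM
      (\<lambda>t i. clamp_u S i (aM t i) (u_mpc S r Reg \<Delta> fc f w aM t i)) X finf"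
  proof (rule closed_loop_of_solution[OF sol sets _ _ ol \<open>fo 0 = f 0\<close> fo_lim wo_lim])
    show "0 < eps S i \<and> 0 < Tc S i \<and> eps S i * Tc S i < 1" if "i \<in> Iu S" for i
      using u_params epsT that by auto
    show "wlo S i < thlo S i \<and> thlo S i < 0 \<and> 0 < thhi S i \<and> thhi S i < whi S i
        \<and> 0 < glo S i \<and> 0 < ghi S i" if "i \<in> Iw S" for i using w_params that by auto
  qed
  then interpret closed_loop S p pstar tbar f w aM
      "\<lambda>t i. clamp_u S i (aM t i) (u_mpc S r Reg \<Delta> fc f w aM t i)" X finf .
  show ?thesis
  proof (intro conjI ballI impI allI)
    show "w t i \<in> {wlo S i .. whi S i}" if "i \<in> Iw S" "w 0 i \<in> {wlo S i .. whi S i}" "0 \<le> t" for i t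
      using that by (rule w_in_band)
    show "\<exists>t0. \<forall>t\<ge>t0. w t i \<in> {wlo S i .. whi S i}" if "i \<in> Iw S" for i
      using that by (rule w_eventually_in_band)
    show "((\<lambda>t. alpha_df S p f w aM t i + aM t i) \<longlongrightarrow> 0) at_top" for i
      by (intro tendsto_add_zero alpha_df_tendsto_0 aM_tendsto_0)
  qed (simp_all add: f_tendsto w_tendsto_0 aM_tendsto_0 alpha_df_tendsto_0)
qed

end
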